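(* Let $\mathcal{H}$ be a connected $Moor$-bialgebra. Then $\mathcal{H}$ is generated, as a $Moor$-algebra, by its primitive elements $\ker\Delta$. Moreover, $\ker\Delta=\mathcal{H}_1$.
   Context: $K$ is a field of characteristic zero; $\tau$ is the flip map. A $Moor$-bialgebra is a graded vector space $\mathcal{H}=\bigoplus_{p>0}\mathcal{H}_p$ with a bilinear operation $\prec$ satisfying $\mathcal{H}_p\prec\mathcal{H}_q\subseteq\mathcal{H}_{p+q}$, $(x\prec y)\prec z=(x\prec z)\prec y$ and $x\prec(y\prec z)=0$, together with a linear map $\Delta:\mathcal{H}\to\mathcal{H}\otimes\mathcal{H}$ (Sweedler notation $\Delta(x)=x_{(1)}\otimes x_{(2)}$) satisfying $(\mathrm{id}\otimes\Delta)\Delta=0$, $(\Delta\otimes\mathrm{id})\Delta=(\mathrm{id}\otimes\tau)(\Delta\otimes\mathrm{id})\Delta$, and $\Delta(x\prec y)=x\otimes e(y)+(x_{(1)}\prec y)\otimes x_{(2)}$ for all $x,y$, where $e:\mathcal{H}\to\mathcal{H}_1$ is the canonical projection. Primitive elements are the elements of $\ker\Delta$. Set $\Delta^{(1)}=\Delta$ and $\Delta^{(r)}=(\Delta\otimes\mathrm{id}^{\otimes(r-1)})\Delta^{(r-1)}$. The $Moor$-bialgebra is connected if $\ker\Delta\subseteq\mathcal{H}_1$ and $\mathcal{H}=\bigcup_{r\geq 1}\ker\Delta^{(r)}$. *)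

theory Defs
  imports Complex_Main "HOL-Library.Function_Algebras"
begin

text \<open>
  The Moor-bialgebra is the whole type 'h, a vector space over the field 'k
  (characteristic zero) with scalar multiplication scale.
  Tensor powers are realised as in the textbook construction: the free vector space on
  words (lists) of elements of 'h, i.e. finitely supported functions 'h list => 'k,
  modulo the subspace spanned by the multilinearity relations in every slot.  A word
  [x1,...,xn] stands for the pure tensor x1 (x) ... (x) xn.  Equality in the tensor
  product is the relation tensor_eq (difference lies in the span of the relations).
\<close>

definition fsmult :: "'k::field \<Rightarrow> ('h list \<Rightarrow> 'k) \<Rightarrow> ('h list \<Rightarrow> 'k)" where
  "fsmult c t = (\<lambda>w. c * t w)"

definition word :: "'h list \<Rightarrow> ('h list \<Rightarrow> 'k::zero_neq_one)" where
  "word w = (\<lambda>v. if v = w then 1 else 0)"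

definition tensor_rels :: "('k::field \<Rightarrow> 'h::ab_group_add \<Rightarrow> 'h) \<Rightarrow> ('h list \<Rightarrow> 'k) set" where
  "tensor_rels scale =
     {word (u @ (a + b) # v) - word (u @ a # v) - word (u @ b # v) | u a b v. True}
   \<union> {word (u @ scale c a # v) - fsmult c (word (u @ a # v)) | u c a v. True}"

definition tensor_eq :: "('k::field \<Rightarrow> 'h::ab_group_add \<Rightarrow> 'h) \<Rightarrow> ('h list \<Rightarrow> 'k) \<Rightarrow> ('h list \<Rightarrow> 'k) \<Rightarrow> bool" where
  "tensor_eq scale s t \<longleftrightarrow> s - t \<in> module.span fsmult (tensor_rels scale)"

definition lin_ext :: "('h list \<Rightarrow> ('h list \<Rightarrow> 'k::field)) \<Rightarrow> ('h list \<Rightarrow> 'k) \<Rightarrow> ('h list \<Rightarrow> 'k)" where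
  "lin_ext f t = (\<lambda>v. \<Sum>w\<in>{w. t w \<noteq> 0}. t w * f w v)"

text \<open>(Delta (x) id (x) ... (x) id) on a pure tensor\<close>
fun first_Delta :: "('h \<Rightarrow> ('h list \<Rightarrow> 'k::field)) \<Rightarrow> 'h list \<Rightarrow> ('h list \<Rightarrow> 'k)" where
  "first_Delta D [] = 0"
| "first_Delta D (a # r) = lin_ext (\<lambda>u. word (u @ r)) (D a)"

text \<open>(id (x) Delta) on a pure tensor of H (x) H\<close>
fun second_Delta :: "('h \<Rightarrow> ('h list \<Rightarrow> 'k::field)) \<Rightarrow> 'h list \<Rightarrow> ('h list \<Rightarrow> 'k)" where
  "second_Delta D [a, b] = lin_ext (\<lambda>u. word (a # u)) (D b)"
| "second_Delta D _ = 0"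

fun flip23 :: "'h list \<Rightarrow> ('h list \<Rightarrow> 'k::field)" where
  "flip23 [a, b, c] = word [a, c, b]"
| "flip23 _ = 0"

fun prec_first :: "('h \<Rightarrow> 'h \<Rightarrow> 'h) \<Rightarrow> 'h \<Rightarrow> 'h list \<Rightarrow> ('h list \<Rightarrow> 'k::field)" where
  "prec_first prec y [a, b] = word [prec a y, b]"
| "prec_first prec y _ = 0"

fun Delta_pow :: "('h \<Rightarrow> ('h list \<Rightarrow> 'k::field)) \<Rightarrow> nat \<Rightarrow> 'h \<Rightarrow> ('h list \<Rightarrow> 'k)" where
  "Delta_pow D 0 x = word [x]"
| "Delta_pow D (Suc 0) x = D x"
| "Delta_pow D (Suc (Suc r)) x = lin_ext (first_Delta D) (Delta_pow D (Suc r) x)"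

text \<open>H = direct sum of the subspaces G p, p > 0\<close>
definition graded :: "('k::field \<Rightarrow> 'h::ab_group_add \<Rightarrow> 'h) \<Rightarrow> (nat \<Rightarrow> 'h set) \<Rightarrow> bool" where
  "graded scale G \<longleftrightarrow> (\<forall>p>0. module.subspace scale (G p)) \<and>
     (\<forall>x. \<exists>!c::nat \<Rightarrow> 'h. c 0 = 0 \<and> (\<forall>p>0. c p \<in> G p) \<and> finite {p. c p \<noteq> 0}
                          \<and> x = (\<Sum>p\<in>{p. c p \<noteq> 0}. c p))"

definition grade_comp :: "(nat \<Rightarrow> 'h::ab_group_add set) \<Rightarrow> 'h \<Rightarrow> nat \<Rightarrow> 'h" where
  "grade_comp G x = (THE c. c 0 = 0 \<and> (\<forall>p>0. c p \<in> G p) \<and> finite {p. c p \<noteq> 0}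
                          \<and> x = (\<Sum>p\<in>{p. c p \<noteq> 0}. c p))"

definition proj1 :: "(nat \<Rightarrow> 'h::ab_group_add set) \<Rightarrow> 'h \<Rightarrow> 'h" where
  "proj1 G x = grade_comp G x 1"

definition moor_bialgebra ::
  "('k::field_char_0 \<Rightarrow> 'h::ab_group_add \<Rightarrow> 'h) \<Rightarrow> (nat \<Rightarrow> 'h set) \<Rightarrow> ('h \<Rightarrow> 'h \<Rightarrow> 'h)
     \<Rightarrow> ('h \<Rightarrow> ('h list \<Rightarrow> 'k)) \<Rightarrow> bool" where
  "moor_bialgebra scale G prec D \<longleftrightarrow>
     vector_space scale \<and> graded scale G \<and>
     \<comment> \<open>bilinear, graded, Moor identities\<close>
     (\<forall>x. Vector_Spaces.linear scale scale (prec x)) \<and>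
     (\<forall>y. Vector_Spaces.linear scale scale (\<lambda>x. prec x y)) \<and>
     (\<forall>p>0. \<forall>q>0. \<forall>x\<in>G p. \<forall>y\<in>G q. prec x y \<in> G (p + q)) \<and>
     (\<forall>x y z. prec (prec x y) z = prec (prec x z) y) \<and>
     (\<forall>x y z. prec x (prec y z) = 0) \<and>
     \<comment> \<open>Delta : H \<rightarrow> H (x) H linear\<close>
     (\<forall>x. D x \<in> module.span fsmult (word ` {w. length w = 2})) \<and>
     (\<forall>x y. tensor_eq scale (D (x + y)) (D x + D y)) \<and>
     (\<forall>c x. tensor_eq scale (D (scale c x)) (fsmult c (D x))) \<and>
     \<comment> \<open>(id (x) Delta) Delta = 0\<close>
     (\<forall>x. tensor_eq scale (lin_ext (second_Delta D) (D x)) 0) \<and>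
     \<comment> \<open>(Delta (x) id) Delta = (id (x) tau)(Delta (x) id) Delta\<close>
     (\<forall>x. tensor_eq scale (lin_ext (first_Delta D) (D x))
                          (lin_ext flip23 (lin_ext (first_Delta D) (D x)))) \<and>
     \<comment> \<open>Delta (x \<prec> y) = x (x) e(y) + (x_(1) \<prec> y) (x) x_(2)\<close>
     (\<forall>x y. tensor_eq scale (D (prec x y))
                          (word [x, proj1 G y] + lin_ext (prec_first prec y) (D x)))"

definition primitives :: "('k::field \<Rightarrow> 'h::ab_group_add \<Rightarrow> 'h) \<Rightarrow> ('h \<Rightarrow> ('h list \<Rightarrow> 'k)) \<Rightarrow> 'h set" where
  "primitives scale D = {x. tensor_eq scale (D x) 0}"

definition ker_Delta_pow :: "('k::field \<Rightarrow> 'h::ab_group_add \<Rightarrow> 'h) \<Rightarrow> ('h \<Rightarrow> ('h list \<Rightarrow> 'k)) \<Rightarrow> nat \<Rightarrow> 'h set" where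
  "ker_Delta_pow scale D r = {x. tensor_eq scale (Delta_pow D r x) 0}"

definition connected_moor ::
  "('k::field_char_0 \<Rightarrow> 'h::ab_group_add \<Rightarrow> 'h) \<Rightarrow> (nat \<Rightarrow> 'h set) \<Rightarrow> ('h \<Rightarrow> ('h list \<Rightarrow> 'k)) \<Rightarrow> bool" where
  "connected_moor scale G D \<longleftrightarrow>
     primitives scale D \<subseteq> G 1 \<and> UNIV = (\<Union>r\<in>{1..}. ker_Delta_pow scale D r)"

definition moor_generated :: "('k::field \<Rightarrow> 'h::ab_group_add \<Rightarrow> 'h) \<Rightarrow> ('h \<Rightarrow> 'h \<Rightarrow> 'h) \<Rightarrow> 'h set \<Rightarrow> 'h set" where
  "moor_generated scale prec P =
     \<Inter>{S. P \<subseteq> S \<and> module.subspace scale S \<and> (\<forall>x\<in>S. \<forall>y\<in>S. prec x y \<in> S)}"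

end

theory Submission
  imports Defs
begin

text \<open>
  Write \<open>m\<close> for the multiplication \<open>x \<otimes> y \<mapsto> x \<prec> y\<close>.  Every \<open>b \<in> H\<^sub>1\<close> is
  primitive: applying \<open>id \<otimes> \<Delta>\<close> to \<open>\<Delta>(x \<prec> b) = x \<otimes> b + (x\<^sub>1 \<prec> b) \<otimes> x\<^sub>2\<close>
  kills everything except \<open>x \<otimes> \<Delta> b\<close>.

  For generation one shows by induction on \<open>n\<close> that \<open>\<Delta>\<^sup>n\<^sup>+\<^sup>1 x = 0\<close> implies both
  \<open>x \<in> S\<close>, for every subspace \<open>S \<supseteq> H\<^sub>1\<close> closed under \<open>\<prec>\<close>, and
  \<open>\<Delta>\<^sup>n (m \<Delta> x - n x) = 0\<close>.  Write \<open>\<Delta> x = \<Sum>\<^sub>b u\<^sub>b \<otimes> b\<close> with \<open>b\<close> ranging over an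
  independent set; the \<open>b\<close> are primitive because \<open>(id \<otimes> \<Delta>) \<Delta> = 0\<close>, hence lie in
  \<open>H\<^sub>1\<close> by connectedness.  Then \<open>\<Delta>\<^sup>n u\<^sub>b = 0\<close> and \<open>m \<Delta> x = \<Sum>\<^sub>b u\<^sub>b \<prec> b \<in> S\<close>.
  The compatibility of \<open>\<Delta>\<close> with \<open>\<prec>\<close> and the twisted coassociativity turn the
  induction hypothesis for the \<open>u\<^sub>b\<close> into \<open>\<Delta>\<^sup>n\<^sup>+\<^sup>1 y = 0\<close> for
  \<open>y = m \<Delta> x - (n + 1) x\<close>, so \<open>y \<in> S\<close>; as the characteristic is zero,
  \<open>x = (m \<Delta> x - y) / (n + 1) \<in> S\<close>.
\<close>

section \<open>Finitely supported formal sums of words\<close>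

lemma sum_fun_apply: "(\<Sum>i\<in>S. f i) x = (\<Sum>i\<in>S. f i x)"
  by (induction S rule: infinite_finite_induct) auto

lemma fsmult_apply: "fsmult c t w = c * t w"
  by (simp add: fsmult_def)

lemma module_fsmult: "module (fsmult :: 'k::field \<Rightarrow> ('a list \<Rightarrow> 'k) \<Rightarrow> _)"
  by unfold_locales (auto simp: fsmult_def fun_eq_iff algebra_simps)

interpretation fs: module "fsmult :: 'k::field \<Rightarrow> ('a list \<Rightarrow> 'k) \<Rightarrow> _"
  by (rule module_fsmult)

lemma fsmult_add_left: "fsmult (a + b) t = fsmult a t + fsmult b t"
  by (simp add: fsmult_def fun_eq_iff algebra_simps)

lemma fsmult_add_right: "fsmult c (s + t) = fsmult c s + fsmult c t"
  by (simp add: fsmult_def fun_eq_iff algebra_simps)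

lemma fsmult_zero_left[simp]: "fsmult 0 t = 0"
  by (simp add: fsmult_def fun_eq_iff)

lemma fsmult_minus_one: "fsmult (-1) t = - t"
  by (simp add: fsmult_def fun_eq_iff)

lemma sum_fsmult_indicator:
  assumes "finite A" "a \<in> A" "\<forall>a'\<in>A. \<phi> a' = (if a' = a then 1 else 0)"
  shows "(\<Sum>a'\<in>A. fsmult (\<phi> a') (f a')) = f a"
proof -
  have "(\<Sum>a'\<in>A. fsmult (\<phi> a') (f a')) = (\<Sum>a'\<in>A. if a' = a then f a' else 0)"
    using assms(3) by (intro sum.cong) (auto simp: fsmult_def fun_eq_iff)
  also have "\<dots> = f a" using assms(1,2) by simp
  finally show ?thesis .
qed

definition supp :: "('a \<Rightarrow> 'k::field) \<Rightarrow> 'a set" where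
  "supp t = {w. t w \<noteq> 0}"

abbreviation finite_supp :: "('a \<Rightarrow> 'k::field) \<Rightarrow> bool" where
  "finite_supp t \<equiv> finite (supp t)"

lemma word_apply: "word w v = (if v = w then 1 else 0)"
  by (simp add: word_def)

lemma supp_word[simp]: "supp (word w :: _ \<Rightarrow> 'k::field) = {w}"
  by (auto simp: supp_def word_def)

lemma supp_add: "supp (s + t) \<subseteq> supp s \<union> supp t"
  by (auto simp: supp_def)

lemma supp_diff: "supp (s - t) \<subseteq> supp s \<union> supp t"
  by (auto simp: supp_def)

lemma supp_fsmult: "supp (fsmult c t) \<subseteq> supp t"
  by (auto simp: supp_def fsmult_def)

lemma supp_sum: "supp (\<Sum>i\<in>I. g i) \<subseteq> (\<Union>i\<in>I. supp (g i))"
proof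
  fix w assume "w \<in> supp (\<Sum>i\<in>I. g i)"
  then have "(\<Sum>i\<in>I. g i w) \<noteq> 0" by (simp add: supp_def sum_fun_apply)
  then obtain i where "i \<in> I" "g i w \<noteq> 0" by (meson sum.neutral)
  then show "w \<in> (\<Union>i\<in>I. supp (g i))" by (auto simp: supp_def)
qed

lemma finite_supp_zero[simp]: "finite_supp 0"
  by (simp add: supp_def)

lemma finite_supp_word[simp, intro]: "finite_supp (word w :: _ \<Rightarrow> 'k::field)"
  by simp

lemma finite_supp_add[simp, intro]: "finite_supp s \<Longrightarrow> finite_supp t \<Longrightarrow> finite_supp (s + t)"
  by (meson finite_UnI finite_subset supp_add)

lemma finite_supp_diff[simp, intro]: "finite_supp s \<Longrightarrow> finite_supp t \<Longrightarrow> finite_supp (s - t)"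
  by (meson finite_UnI finite_subset supp_diff)

lemma finite_supp_fsmult[simp, intro]: "finite_supp t \<Longrightarrow> finite_supp (fsmult c t)"
  by (meson finite_subset supp_fsmult)

lemma finite_supp_sum[intro]:
  "finite I \<Longrightarrow> (\<And>i. i \<in> I \<Longrightarrow> finite_supp (g i)) \<Longrightarrow> finite_supp (\<Sum>i\<in>I. g i)"
  by (rule finite_subset[OF supp_sum]) auto

lemma lin_ext_eq:
  assumes "supp t \<subseteq> S" "finite S"
  shows "lin_ext f t = (\<Sum>w\<in>S. fsmult (t w) (f w))"
proof
  fix v
  have "lin_ext f t v = (\<Sum>w\<in>supp t. t w * f w v)" by (simp add: lin_ext_def supp_def)
  also have "\<dots> = (\<Sum>w\<in>S. t w * f w v)"
    by (rule sum.mono_neutral_left) (use assms in \<open>auto simp: supp_def\<close>)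
  finally show "lin_ext f t v = (\<Sum>w\<in>S. fsmult (t w) (f w)) v"
    by (simp add: sum_fun_apply fsmult_apply)
qed

lemma lin_ext_add:
  assumes "finite_supp s" "finite_supp t"
  shows "lin_ext f (s + t) = lin_ext f s + lin_ext f t"
proof -
  let ?S = "supp s \<union> supp t"
  have "lin_ext f (s + t) = (\<Sum>w\<in>?S. fsmult ((s + t) w) (f w))"
    using assms supp_add[of s t] by (intro lin_ext_eq) auto
  also have "\<dots> = (\<Sum>w\<in>?S. fsmult (s w) (f w)) + (\<Sum>w\<in>?S. fsmult (t w) (f w))"
    by (simp add: fsmult_add_left sum.distrib)
  also have "\<dots> = lin_ext f s + lin_ext f t"
    using assms by (simp add: lin_ext_eq[of s ?S] lin_ext_eq[of t ?S])
  finally show ?thesis .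
qed

lemma lin_ext_fsmult:
  assumes "finite_supp t"
  shows "lin_ext f (fsmult c t) = fsmult c (lin_ext f t)"
proof -
  have "lin_ext f (fsmult c t) = (\<Sum>w\<in>supp t. fsmult (c * t w) (f w))"
    using assms supp_fsmult by (subst lin_ext_eq) (auto simp: fsmult_apply)
  also have "\<dots> = fsmult c (\<Sum>w\<in>supp t. fsmult (t w) (f w))"
    by (simp add: fsmult_def fun_eq_iff sum_fun_apply sum_distrib_left algebra_simps)
  also have "\<dots> = fsmult c (lin_ext f t)"
    using assms by (simp only: lin_ext_eq[OF order.refl])
  finally show ?thesis .
qed

lemma lin_ext_zero[simp]: "lin_ext f 0 = 0"
  by (simp add: lin_ext_def fun_eq_iff)

lemma lin_ext_diff:
  assumes "finite_supp s" "finite_supp t"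
  shows "lin_ext f (s - t) = lin_ext f s - lin_ext f t"
  using assms lin_ext_add[of s "- t" f] lin_ext_fsmult[of t f "-1"]
  by (simp add: fsmult_minus_one supp_def)

lemma lin_ext_sum:
  assumes "finite I" "\<And>i. i \<in> I \<Longrightarrow> finite_supp (g i)"
  shows "lin_ext f (\<Sum>i\<in>I. g i) = (\<Sum>i\<in>I. lin_ext f (g i))"
  using assms
proof (induction I rule: finite_induct)
  case (insert x F)
  then have "finite_supp (sum g F)" "finite_supp (g x)" by auto
  then show ?case using insert
    by (simp only: sum.insert[OF insert(1,2)] lin_ext_add) (simp add: insert.IH insert.prems)
qed simp

lemma lin_ext_word[simp]: "lin_ext f (word w) = f w"
  by (subst lin_ext_eq[of _ "{w}"]) (auto simp: fun_eq_iff word_apply fsmult_apply)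

lemma lin_ext_word_id: "finite_supp t \<Longrightarrow> lin_ext word t = t"
  by (auto simp: lin_ext_def supp_def word_apply fun_eq_iff if_distrib cong: if_cong)

lemma lin_ext_cong: "(\<And>w. w \<in> supp t \<Longrightarrow> f w = g w) \<Longrightarrow> lin_ext f t = lin_ext g t"
  by (simp add: lin_ext_def supp_def)

lemma lin_ext_plus_fun: "lin_ext (\<lambda>w. f w + g w) t = lin_ext f t + lin_ext g t"
  by (simp add: lin_ext_def fun_eq_iff sum.distrib algebra_simps)

lemma lin_ext_fsmult_fun: "lin_ext (\<lambda>w. fsmult c (f w)) t = fsmult c (lin_ext f t)"
  by (simp add: lin_ext_def fun_eq_iff sum_distrib_left algebra_simps fsmult_apply)

lemma supp_lin_ext: "supp (lin_ext f t) \<subseteq> (\<Union>w\<in>supp t. supp (f w))"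
proof
  fix v assume "v \<in> supp (lin_ext f t)"
  then have "(\<Sum>w\<in>{w. t w \<noteq> 0}. t w * f w v) \<noteq> 0" by (simp add: supp_def lin_ext_def)
  then obtain w where "w \<in> {w. t w \<noteq> 0}" "t w * f w v \<noteq> 0" by (meson sum.neutral)
  then show "v \<in> (\<Union>w\<in>supp t. supp (f w))" by (auto simp: supp_def)
qed

lemma finite_supp_lin_ext[intro]:
  "finite_supp t \<Longrightarrow> (\<And>w. w \<in> supp t \<Longrightarrow> finite_supp (f w)) \<Longrightarrow> finite_supp (lin_ext f t)"
  by (rule finite_subset[OF supp_lin_ext]) auto

lemma lin_ext_comp:
  assumes "finite_supp t" "\<And>w. w \<in> supp t \<Longrightarrow> finite_supp (f w)"
  shows "lin_ext g (lin_ext f t) = lin_ext (\<lambda>w. lin_ext g (f w)) t"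
proof -
  have "lin_ext g (lin_ext f t) = lin_ext g (\<Sum>w\<in>supp t. fsmult (t w) (f w))"
    using assms by (simp add: lin_ext_eq[of t "supp t"])
  also have "\<dots> = (\<Sum>w\<in>supp t. fsmult (t w) (lin_ext g (f w)))"
    using assms by (simp add: lin_ext_sum lin_ext_fsmult)
  also have "\<dots> = lin_ext (\<lambda>w. lin_ext g (f w)) t"
    using assms by (simp add: lin_ext_eq[of t "supp t"])
  finally show ?thesis .
qed

section \<open>Tensor powers as formal sums modulo multilinearity\<close>

locale tensor_power = vector_space scale for scale :: "'k::field \<Rightarrow> 'h::ab_group_add \<Rightarrow> 'h"
begin

abbreviation rels_span :: "('h list \<Rightarrow> 'k) set" where
  "rels_span \<equiv> fs.span (tensor_rels scale)"

abbreviation teq (infix "\<approx>" 50) where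
  "s \<approx> t \<equiv> tensor_eq scale s t"

lemma teq_iff: "s \<approx> t \<longleftrightarrow> s - t \<in> rels_span"
  by (simp add: tensor_eq_def)

lemma teq_refl[simp, intro]: "s \<approx> s"
  by (simp add: teq_iff fs.span_zero)

lemma teq_sym: "s \<approx> t \<Longrightarrow> t \<approx> s"
  unfolding teq_iff by (drule fs.span_neg) simp

lemma teq_trans[trans]: "s \<approx> t \<Longrightarrow> t \<approx> u \<Longrightarrow> s \<approx> u"
  unfolding teq_iff by (drule (1) fs.span_add) simp

lemma eq_teq_trans[trans]: "s = t \<Longrightarrow> t \<approx> u \<Longrightarrow> s \<approx> u"
  by simp

lemma teq_eq_trans[trans]: "s \<approx> t \<Longrightarrow> t = u \<Longrightarrow> s \<approx> u"
  by simp

lemma teq_add: "s \<approx> s' \<Longrightarrow> t \<approx> t' \<Longrightarrow> s + t \<approx> s' + t'"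
  unfolding teq_iff by (drule (1) fs.span_add) (simp add: algebra_simps)

lemma teq_diff: "s \<approx> s' \<Longrightarrow> t \<approx> t' \<Longrightarrow> s - t \<approx> s' - t'"
  unfolding teq_iff by (drule (1) fs.span_diff) (simp add: algebra_simps)

lemma teq_fsmult: "s \<approx> s' \<Longrightarrow> fsmult c s \<approx> fsmult c s'"
  unfolding teq_iff
  by (drule fs.span_scale[of _ _ c]) (simp add: fsmult_def algebra_simps fun_diff_def)

lemma teq_sum: "(\<And>i. i \<in> I \<Longrightarrow> f i \<approx> g i) \<Longrightarrow> (\<Sum>i\<in>I. f i) \<approx> (\<Sum>i\<in>I. g i)"
  by (induction I rule: infinite_finite_induct) (auto intro: teq_add)

lemma word_add_slot: "word (u @ (a + b) # v) \<approx> word (u @ a # v) + word (u @ b # v)"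
proof -
  have "word (u @ (a + b) # v) - word (u @ a # v) - word (u @ b # v) \<in> rels_span"
    by (rule fs.span_base) (auto simp: tensor_rels_def)
  then show ?thesis by (simp add: teq_iff algebra_simps)
qed

lemma word_scale_slot: "word (u @ scale c a # v) \<approx> fsmult c (word (u @ a # v))"
proof -
  have "word (u @ scale c a # v) - fsmult c (word (u @ a # v)) \<in> rels_span"
    by (rule fs.span_base) (unfold tensor_rels_def, blast)
  then show ?thesis by (simp add: teq_iff)
qed

lemma word_zero_slot: "word (u @ 0 # v) \<approx> 0"
  using word_scale_slot[of u 0 0 v] by simp

lemma word_sum_slot:
  "finite I \<Longrightarrow> word (u @ (\<Sum>i\<in>I. g i) # v) \<approx> (\<Sum>i\<in>I. word (u @ g i # v))"
proof (induction I rule: finite_induct)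
  case empty
  then show ?case by (simp only: sum.empty) (rule word_zero_slot)
next
  case (insert x F)
  have "word (u @ (\<Sum>i\<in>insert x F. g i) # v) = word (u @ (g x + (\<Sum>i\<in>F. g i)) # v)"
    using insert by simp
  also have "\<dots> \<approx> word (u @ g x # v) + word (u @ (\<Sum>i\<in>F. g i) # v)"
    by (rule word_add_slot)
  also have "\<dots> \<approx> word (u @ g x # v) + (\<Sum>i\<in>F. word (u @ g i # v))"
    using insert by (intro teq_add) auto
  finally show ?case using insert(1,2) by (subst sum.insert) auto
qed

lemma word2_scale_first: "fsmult c (word [a, b]) \<approx> word [scale c a, b]"
  using teq_sym[OF word_scale_slot[of "[]" c a "[b]"]] by simp

lemma word2_scale_second: "fsmult c (word [a, b]) \<approx> word [a, scale c b]"
  using teq_sym[OF word_scale_slot[of "[a]" c b "[]"]] by simp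

definition respects_multilin :: "('h list \<Rightarrow> ('h list \<Rightarrow> 'k)) \<Rightarrow> bool" where
  "respects_multilin f \<longleftrightarrow>
     (\<forall>u a b v. f (u @ (a + b) # v) \<approx> f (u @ a # v) + f (u @ b # v)) \<and>
     (\<forall>u c a v. f (u @ scale c a # v) \<approx> fsmult c (f (u @ a # v)))"

lemma respects_multilinI:
  assumes "\<And>u a b v. f (u @ (a + b) # v) \<approx> f (u @ a # v) + f (u @ b # v)"
    and "\<And>u c a v. f (u @ scale c a # v) \<approx> fsmult c (f (u @ a # v))"
  shows "respects_multilin f"
  using assms by (simp add: respects_multilin_def)

lemma finite_supp_tensor_rels: "g \<in> tensor_rels scale \<Longrightarrow> finite_supp g"
  by (auto simp: tensor_rels_def)

lemma lin_ext_rels_span: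
  assumes "respects_multilin f" "t \<in> rels_span"
  shows "lin_ext f t \<in> rels_span"
proof -
  have gen: "finite_supp g \<and> lin_ext f g \<in> rels_span" if g: "g \<in> tensor_rels scale" for g
  proof (cases rule: UnE[OF g[unfolded tensor_rels_def]])
    case 1
    then obtain u a b v
      where "g = word (u @ (a + b) # v) - word (u @ a # v) - word (u @ b # v)" by blast
    then have "lin_ext f g = f (u @ (a + b) # v) - f (u @ a # v) - f (u @ b # v)"
      by (simp add: lin_ext_diff)
    also have "\<dots> \<in> rels_span"
      using assms(1) unfolding respects_multilin_def teq_iff by (simp add: algebra_simps)
    finally show ?thesis using finite_supp_tensor_rels[OF g] by simp
  next
    case 2
    then obtain u c a v where "g = word (u @ scale c a # v) - fsmult c (word (u @ a # v))"
      by blast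
    then have "lin_ext f g = f (u @ scale c a # v) - fsmult c (f (u @ a # v))"
      by (simp add: lin_ext_diff lin_ext_fsmult)
    also have "\<dots> \<in> rels_span"
      using assms(1) unfolding respects_multilin_def teq_iff by simp
    finally show ?thesis using finite_supp_tensor_rels[OF g] by simp
  qed
  have "fs.subspace {t. finite_supp t \<and> lin_ext f t \<in> rels_span}"
    unfolding fs.subspace_def
    by (auto simp: lin_ext_add lin_ext_fsmult fs.span_add fs.span_scale fs.span_zero)
  then show ?thesis
    using fs.span_induct[OF assms(2), of "\<lambda>t. finite_supp t \<and> lin_ext f t \<in> rels_span"] gen
    by simp
qed

lemma lin_ext_teq_cong:
  assumes "respects_multilin f" "finite_supp s" "finite_supp t" "s \<approx> t"
  shows "lin_ext f s \<approx> lin_ext f t"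
  using lin_ext_rels_span[OF assms(1), of "s - t"] assms by (simp add: teq_iff lin_ext_diff)

lemma lin_ext_teq_zero:
  assumes "respects_multilin f" "finite_supp s" "s \<approx> 0"
  shows "lin_ext f s \<approx> 0"
  using lin_ext_teq_cong[OF assms(1,2) _ assms(3)] by simp

lemma lin_ext_pointwise_teq:
  assumes "finite_supp t" "\<And>w. w \<in> supp t \<Longrightarrow> f w \<approx> g w"
  shows "lin_ext f t \<approx> lin_ext g t"
proof -
  have "lin_ext f t = (\<Sum>w\<in>supp t. fsmult (t w) (f w))"
    using assms by (simp add: lin_ext_eq[of t "supp t"])
  also have "\<dots> \<approx> (\<Sum>w\<in>supp t. fsmult (t w) (g w))"
    using assms by (intro teq_sum teq_fsmult) auto
  also have "\<dots> = lin_ext g t"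
    using assms by (simp add: lin_ext_eq[of t "supp t"])
  finally show ?thesis .
qed

lemma lin_ext_word_add_slot:
  assumes "finite_supp t"
  shows "lin_ext (\<lambda>w. word (p w @ (a + a') # q w)) t \<approx>
           lin_ext (\<lambda>w. word (p w @ a # q w)) t + lin_ext (\<lambda>w. word (p w @ a' # q w)) t"
proof -
  have "lin_ext (\<lambda>w. word (p w @ (a + a') # q w)) t
          \<approx> lin_ext (\<lambda>w. word (p w @ a # q w) + word (p w @ a' # q w)) t"
    using assms by (intro lin_ext_pointwise_teq word_add_slot)
  then show ?thesis by (simp only: lin_ext_plus_fun)
qed

lemma lin_ext_word_scale_slot:
  assumes "finite_supp t"
  shows "lin_ext (\<lambda>w. word (p w @ scale c a # q w)) t \<approx>
           fsmult c (lin_ext (\<lambda>w. word (p w @ a # q w)) t)"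
proof -
  have "lin_ext (\<lambda>w. word (p w @ scale c a # q w)) t
          \<approx> lin_ext (\<lambda>w. fsmult c (word (p w @ a # q w))) t"
    using assms by (intro lin_ext_pointwise_teq word_scale_slot)
  then show ?thesis by (simp only: lin_ext_fsmult_fun)
qed

lemma length2_append_cases:
  assumes "length (u @ x # v) = 2"
  obtains b where "u = []" "v = [b]" | a where "u = [a]" "v = []"
  using assms by (cases u; cases v) auto

lemma length3_append_cases:
  assumes "length (u @ x # v) = 3"
  obtains b c where "u = []" "v = [b, c]" | a c where "u = [a]" "v = [c]"
    | a b where "u = [a, b]" "v = []"
proof -
  have "length u + length v = 2" using assms by simp
  then show ?thesis using that by (cases u; cases v) (auto simp: length_Suc_conv)
qed

lemma respects_multilin_length2I:
  assumes "\<And>w. length w \<noteq> 2 \<Longrightarrow> f w = 0"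
    and "\<And>a a' b. f [a + a', b] \<approx> f [a, b] + f [a', b]"
    and "\<And>c a b. f [scale c a, b] \<approx> fsmult c (f [a, b])"
    and "\<And>a b b'. f [a, b + b'] \<approx> f [a, b] + f [a, b']"
    and "\<And>c a b. f [a, scale c b] \<approx> fsmult c (f [a, b])"
  shows "respects_multilin f"
proof (rule respects_multilinI)
  fix u a b v
  show "f (u @ (a + b) # v) \<approx> f (u @ a # v) + f (u @ b # v)"
  proof (cases "length (u @ a # v) = 2")
    case True
    then show ?thesis by (cases rule: length2_append_cases) (auto intro: assms(2,4))
  qed (simp add: assms(1))
next
  fix u c a v
  show "f (u @ scale c a # v) \<approx> fsmult c (f (u @ a # v))"
  proof (cases "length (u @ a # v) = 2")
    case True
    then show ?thesis by (cases rule: length2_append_cases) (auto intro: assms(3,5))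
  qed (simp add: assms(1))
qed

lemma respects_multilin_length3I:
  assumes "\<And>w. length w \<noteq> 3 \<Longrightarrow> f w = 0"
    and "\<And>a a' b d. f [a + a', b, d] \<approx> f [a, b, d] + f [a', b, d]"
    and "\<And>c a b d. f [scale c a, b, d] \<approx> fsmult c (f [a, b, d])"
    and "\<And>a b b' d. f [a, b + b', d] \<approx> f [a, b, d] + f [a, b', d]"
    and "\<And>c a b d. f [a, scale c b, d] \<approx> fsmult c (f [a, b, d])"
    and "\<And>a b d d'. f [a, b, d + d'] \<approx> f [a, b, d] + f [a, b, d']"
    and "\<And>c a b d. f [a, b, scale c d] \<approx> fsmult c (f [a, b, d])"
  shows "respects_multilin f"
proof (rule respects_multilinI)
  fix u a b v
  show "f (u @ (a + b) # v) \<approx> f (u @ a # v) + f (u @ b # v)"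
  proof (cases "length (u @ a # v) = 3")
    case True
    then show ?thesis by (cases rule: length3_append_cases) (auto intro: assms(2,4,6))
  qed (simp add: assms(1))
next
  fix u c a v
  show "f (u @ scale c a # v) \<approx> fsmult c (f (u @ a # v))"
  proof (cases "length (u @ a # v) = 3")
    case True
    then show ?thesis by (cases rule: length3_append_cases) (auto intro: assms(3,5,7))
  qed (simp add: assms(1))
qed

definition pad :: "'h list \<Rightarrow> 'h list \<Rightarrow> 'h list \<Rightarrow> ('h list \<Rightarrow> 'k)" where
  "pad p r w = word (p @ w @ r)"

lemma finite_supp_pad[simp, intro]: "finite_supp (pad p r w)"
  by (simp add: pad_def)

lemma respects_multilin_pad: "respects_multilin (pad p r)"
proof (rule respects_multilinI)
  fix u a b v
  show "pad p r (u @ (a + b) # v) \<approx> pad p r (u @ a # v) + pad p r (u @ b # v)"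
    using word_add_slot[of "p @ u" a b "v @ r"] by (simp add: pad_def)
next
  fix u c a v
  show "pad p r (u @ scale c a # v) \<approx> fsmult c (pad p r (u @ a # v))"
    using word_scale_slot[of "p @ u" c a "v @ r"] by (simp add: pad_def)
qed

lemma pad_teq:
  "finite_supp s \<Longrightarrow> finite_supp t \<Longrightarrow> s \<approx> t \<Longrightarrow> lin_ext (pad p r) s \<approx> lin_ext (pad p r) t"
  by (rule lin_ext_teq_cong[OF respects_multilin_pad])

lemma supp_lin_ext_pad: "supp (lin_ext (pad p r) t) \<subseteq> (\<lambda>u. p @ u @ r) ` supp t"
  using supp_lin_ext[of "pad p r" t] by (auto simp: pad_def)

lemma pad_add_prefix:
  "finite_supp t \<Longrightarrow>
   lin_ext (pad (p @ [a + a']) r) t \<approx> lin_ext (pad (p @ [a]) r) t + lin_ext (pad (p @ [a']) r) t"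
  using lin_ext_word_add_slot[where t=t and p="\<lambda>w. p" and a=a and a'=a' and q="\<lambda>w. w @ r"]
  by (simp add: pad_def[abs_def])

lemma pad_scale_prefix:
  "finite_supp t \<Longrightarrow>
   lin_ext (pad (p @ [scale c a]) r) t \<approx> fsmult c (lin_ext (pad (p @ [a]) r) t)"
  using lin_ext_word_scale_slot[where t=t and p="\<lambda>w. p" and c=c and a=a and q="\<lambda>w. w @ r"]
  by (simp add: pad_def[abs_def])

lemma pad_add_suffix:
  "finite_supp t \<Longrightarrow>
   lin_ext (pad p ((a + a') # r)) t \<approx> lin_ext (pad p (a # r)) t + lin_ext (pad p (a' # r)) t"
  using lin_ext_word_add_slot[where t=t and p="\<lambda>w. p @ w" and a=a and a'=a' and q="\<lambda>w. r"]
  by (simp add: pad_def[abs_def])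

lemma pad_scale_suffix:
  "finite_supp t \<Longrightarrow>
   lin_ext (pad p (scale c a # r)) t \<approx> fsmult c (lin_ext (pad p (a # r)) t)"
  using lin_ext_word_scale_slot[where t=t and p="\<lambda>w. p @ w" and c=c and a=a and q="\<lambda>w. r"]
  by (simp add: pad_def[abs_def])

definition lin_functional :: "('h \<Rightarrow> 'k) \<Rightarrow> bool" where
  "lin_functional \<phi> \<longleftrightarrow> (\<forall>x y. \<phi> (x + y) = \<phi> x + \<phi> y) \<and> (\<forall>c x. \<phi> (scale c x) = c * \<phi> x)"

definition contract_first :: "('h \<Rightarrow> 'k) \<Rightarrow> 'h list \<Rightarrow> ('h list \<Rightarrow> 'k)" where
  "contract_first \<phi> w = (case w of [] \<Rightarrow> 0 | a # w' \<Rightarrow> fsmult (\<phi> a) (word w'))"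

definition contract_last :: "('h \<Rightarrow> 'k) \<Rightarrow> 'h list \<Rightarrow> ('h list \<Rightarrow> 'k)" where
  "contract_last \<phi> w = (if w = [] then 0 else fsmult (\<phi> (last w)) (word (butlast w)))"

lemma respects_multilin_contract_first:
  assumes "lin_functional \<phi>"
  shows "respects_multilin (contract_first \<phi>)"
proof (rule respects_multilinI)
  fix u a b v
  show "contract_first \<phi> (u @ (a + b) # v) \<approx>
          contract_first \<phi> (u @ a # v) + contract_first \<phi> (u @ b # v)"
  proof (cases u)
    case Nil
    then show ?thesis using assms by (simp add: lin_functional_def contract_first_def fsmult_add_left)
  next
    case (Cons x u')
    have "fsmult (\<phi> x) (word (u' @ (a + b) # v)) \<approx>
            fsmult (\<phi> x) (word (u' @ a # v) + word (u' @ b # v))"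
      by (intro teq_fsmult word_add_slot)
    then show ?thesis using Cons by (simp add: contract_first_def fsmult_add_right)
  qed
next
  fix u c a v
  show "contract_first \<phi> (u @ scale c a # v) \<approx> fsmult c (contract_first \<phi> (u @ a # v))"
  proof (cases u)
    case Nil
    then show ?thesis using assms
      by (simp add: lin_functional_def contract_first_def fsmult_def mult.assoc)
  next
    case (Cons x u')
    have "fsmult (\<phi> x) (word (u' @ scale c a # v)) \<approx> fsmult (\<phi> x) (fsmult c (word (u' @ a # v)))"
      by (intro teq_fsmult word_scale_slot)
    then show ?thesis using Cons by (simp add: contract_first_def fsmult_def mult.left_commute)
  qed
qed

lemma respects_multilin_contract_last:
  assumes "lin_functional \<phi>"
  shows "respects_multilin (contract_last \<phi>)"
proof (rule respects_multilinI)
  fix u a b v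
  show "contract_last \<phi> (u @ (a + b) # v) \<approx>
          contract_last \<phi> (u @ a # v) + contract_last \<phi> (u @ b # v)"
  proof (cases "v = []")
    case True
    then show ?thesis using assms by (simp add: lin_functional_def contract_last_def fsmult_add_left)
  next
    case False
    have "fsmult (\<phi> (last v)) (word (u @ (a + b) # butlast v)) \<approx>
            fsmult (\<phi> (last v)) (word (u @ a # butlast v) + word (u @ b # butlast v))"
      by (intro teq_fsmult word_add_slot)
    then show ?thesis
      using False by (simp add: contract_last_def fsmult_add_right butlast_append)
  qed
next
  fix u c a v
  show "contract_last \<phi> (u @ scale c a # v) \<approx> fsmult c (contract_last \<phi> (u @ a # v))"
  proof (cases "v = []")
    case True
    then show ?thesis using assms
      by (simp add: lin_functional_def contract_last_def fsmult_def mult.assoc)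
  next
    case False
    have "fsmult (\<phi> (last v)) (word (u @ scale c a # butlast v)) \<approx>
            fsmult (\<phi> (last v)) (fsmult c (word (u @ a # butlast v)))"
      by (intro teq_fsmult word_scale_slot)
    then show ?thesis
      using False by (simp add: contract_last_def fsmult_def mult.left_commute butlast_append)
  qed
qed

lemma contract_first_pad:
  "finite_supp t \<Longrightarrow> lin_ext (contract_first \<phi>) (lin_ext (pad [a] []) t) = fsmult (\<phi> a) t"
  by (subst lin_ext_comp)
    (auto simp: pad_def contract_first_def lin_ext_fsmult_fun[of "\<phi> a" word] lin_ext_word_id)

lemma contract_last_pad:
  "finite_supp t \<Longrightarrow> lin_ext (contract_last \<phi>) (lin_ext (pad [] [b]) t) = fsmult (\<phi> b) t"
  by (subst lin_ext_comp)
    (auto simp: pad_def contract_last_def lin_ext_fsmult_fun[of "\<phi> b" word] lin_ext_word_id)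

definition lin_endo :: "('h \<Rightarrow> 'h) \<Rightarrow> bool" where
  "lin_endo h \<longleftrightarrow> (\<forall>x y. h (x + y) = h x + h y) \<and> (\<forall>c x. h (scale c x) = scale c (h x))"

definition map_first :: "('h \<Rightarrow> 'h) \<Rightarrow> 'h list \<Rightarrow> ('h list \<Rightarrow> 'k)" where
  "map_first h w = (case w of [] \<Rightarrow> 0 | a # w' \<Rightarrow> word (h a # w'))"

lemma finite_supp_map_first[simp, intro]: "finite_supp (map_first h w)"
  by (auto simp: map_first_def split: list.split)

lemma respects_multilin_map_first:
  assumes "lin_endo h"
  shows "respects_multilin (map_first h)"
proof (rule respects_multilinI)
  fix u a b v
  show "map_first h (u @ (a + b) # v) \<approx> map_first h (u @ a # v) + map_first h (u @ b # v)"
    using assms word_add_slot[of "[]" "h a" "h b" v] word_add_slot[of "h (hd u) # tl u" a b v]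
    by (cases u) (simp_all add: map_first_def lin_endo_def)
next
  fix u c a v
  show "map_first h (u @ scale c a # v) \<approx> fsmult c (map_first h (u @ a # v))"
    using assms word_scale_slot[of "[]" c "h a" v] word_scale_slot[of "h (hd u) # tl u" c a v]
    by (cases u) (simp_all add: map_first_def lin_endo_def)
qed

lemma flip23_eq: "flip23 w = (if length w = 3 then word [w!0, w!2, w!1] else 0)"
  by (cases w rule: flip23.cases) auto

lemma finite_supp_flip23[simp, intro]: "finite_supp (flip23 w :: 'h list \<Rightarrow> 'k)"
  by (simp add: flip23_eq)

lemma respects_multilin_flip23: "respects_multilin (flip23 :: 'h list \<Rightarrow> ('h list \<Rightarrow> 'k))"
  by (rule respects_multilin_length3I)
    (auto simp: flip23_eq
      intro: word_add_slot[of "[_]" _ _ "[_]", simplified]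
        word_add_slot[of "[]" _ _ "[_,_]", simplified] word_add_slot[of "[_,_]" _ _ "[]", simplified]
        word_scale_slot[of "[_]" _ _ "[_]", simplified]
        word_scale_slot[of "[]" _ _ "[_,_]", simplified]
        word_scale_slot[of "[_,_]" _ _ "[]", simplified])

definition hlin_ext :: "('h list \<Rightarrow> 'h) \<Rightarrow> ('h list \<Rightarrow> 'k) \<Rightarrow> 'h" where
  "hlin_ext \<nu> t = (\<Sum>w\<in>supp t. scale (t w) (\<nu> w))"

definition multilinear :: "('h list \<Rightarrow> 'h) \<Rightarrow> bool" where
  "multilinear \<nu> \<longleftrightarrow>
     (\<forall>u a b v. \<nu> (u @ (a + b) # v) = \<nu> (u @ a # v) + \<nu> (u @ b # v)) \<and>
     (\<forall>u c a v. \<nu> (u @ scale c a # v) = scale c (\<nu> (u @ a # v)))"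

lemma hlin_ext_eq:
  "supp t \<subseteq> S \<Longrightarrow> finite S \<Longrightarrow> hlin_ext \<nu> t = (\<Sum>w\<in>S. scale (t w) (\<nu> w))"
  unfolding hlin_ext_def by (rule sum.mono_neutral_left) (auto simp: supp_def)

lemma hlin_ext_add:
  "finite_supp s \<Longrightarrow> finite_supp t \<Longrightarrow> hlin_ext \<nu> (s + t) = hlin_ext \<nu> s + hlin_ext \<nu> t"
  using hlin_ext_eq[of "s + t" "supp s \<union> supp t"] hlin_ext_eq[of s "supp s \<union> supp t"]
    hlin_ext_eq[of t "supp s \<union> supp t"] supp_add[of s t]
  by (simp add: scale_left_distrib sum.distrib)

lemma hlin_ext_fsmult:
  "finite_supp t \<Longrightarrow> hlin_ext \<nu> (fsmult c t) = scale c (hlin_ext \<nu> t)"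
  using hlin_ext_eq[of "fsmult c t" "supp t"] supp_fsmult[of c t]
  by (simp add: hlin_ext_def scale_sum_right fsmult_apply)

lemma hlin_ext_word[simp]: "hlin_ext \<nu> (word w) = \<nu> w"
  by (simp add: hlin_ext_def word_apply)

lemma hlin_ext_zero[simp]: "hlin_ext \<nu> 0 = 0"
  by (simp add: hlin_ext_def supp_def)

lemma hlin_ext_diff:
  "finite_supp s \<Longrightarrow> finite_supp t \<Longrightarrow> hlin_ext \<nu> (s - t) = hlin_ext \<nu> s - hlin_ext \<nu> t"
  using hlin_ext_add[of s "- t" \<nu>] hlin_ext_fsmult[of t \<nu> "-1"]
  by (simp add: fsmult_minus_one supp_def scale_minus_left)

lemma hlin_ext_sum:
  assumes "finite I" "\<And>i. i \<in> I \<Longrightarrow> finite_supp (g i)"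
  shows "hlin_ext \<nu> (\<Sum>i\<in>I. g i) = (\<Sum>i\<in>I. hlin_ext \<nu> (g i))"
  using assms
proof (induction I rule: finite_induct)
  case (insert x F)
  then have "finite_supp (sum g F)" "finite_supp (g x)" by auto
  then show ?case using insert
    by (simp only: sum.insert[OF insert(1,2)] hlin_ext_add) (simp add: insert.IH insert.prems)
qed simp

lemma hlin_ext_rels_span:
  assumes "multilinear \<nu>" "t \<in> rels_span"
  shows "hlin_ext \<nu> t = 0"
proof -
  have gen: "finite_supp g \<and> hlin_ext \<nu> g = 0" if g: "g \<in> tensor_rels scale" for g
    using finite_supp_tensor_rels[OF g] assms(1) g
    by (auto simp: tensor_rels_def multilinear_def hlin_ext_diff hlin_ext_fsmult)
  have "fs.subspace {t. finite_supp t \<and> hlin_ext \<nu> t = 0}"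
    unfolding fs.subspace_def by (auto simp: hlin_ext_add hlin_ext_fsmult)
  then show ?thesis
    using fs.span_induct[OF assms(2), of "\<lambda>t. finite_supp t \<and> hlin_ext \<nu> t = 0"] gen by simp
qed

lemma hlin_ext_teq:
  "multilinear \<nu> \<Longrightarrow> finite_supp s \<Longrightarrow> finite_supp t \<Longrightarrow> s \<approx> t \<Longrightarrow> hlin_ext \<nu> s = hlin_ext \<nu> t"
  using hlin_ext_rels_span[of \<nu> "s - t"] by (simp add: teq_iff hlin_ext_diff)

lemma lin_ext_comp_hlin_ext:
  assumes g_add: "\<And>x y. g (x + y) \<approx> g x + g y"
    and g_scale: "\<And>c x. g (scale c x) \<approx> fsmult c (g x)"
    and t: "finite_supp t"
  shows "lin_ext (\<lambda>w. g (\<nu> w)) t \<approx> g (hlin_ext \<nu> t)"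
proof -
  have g_sum: "g (\<Sum>w\<in>S. f w) \<approx> (\<Sum>w\<in>S. g (f w))" if "finite S" for S and f :: "'h list \<Rightarrow> 'h"
    using that
  proof (induction S rule: finite_induct)
    case empty
    then show ?case using g_scale[of 0 0] by (simp only: scale_zero_left fsmult_zero_left sum.empty)
  next
    case (insert x F)
    have "g (\<Sum>w\<in>insert x F. f w) = g (f x + (\<Sum>w\<in>F. f w))" using insert by simp
    also have "\<dots> \<approx> g (f x) + g (\<Sum>w\<in>F. f w)" by (rule g_add)
    also have "\<dots> \<approx> g (f x) + (\<Sum>w\<in>F. g (f w))" using insert by (intro teq_add) auto
    finally show ?case using insert(1,2) by (subst sum.insert) auto
  qed
  have "lin_ext (\<lambda>w. g (\<nu> w)) t = (\<Sum>w\<in>supp t. fsmult (t w) (g (\<nu> w)))"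
    using t by (simp add: lin_ext_eq[of t "supp t"])
  also have "\<dots> \<approx> (\<Sum>w\<in>supp t. g (scale (t w) (\<nu> w)))"
    by (intro teq_sum teq_sym[OF g_scale])
  also have "\<dots> \<approx> g (\<Sum>w\<in>supp t. scale (t w) (\<nu> w))"
    by (rule teq_sym[OF g_sum[OF t]])
  finally show ?thesis by (simp add: hlin_ext_def)
qed

lemma dual_functional_exists:
  assumes "independent B" "b \<in> B"
  shows "\<exists>\<phi>. lin_functional \<phi> \<and> (\<forall>b'\<in>B. \<phi> b' = (if b' = b then 1 else 0))"
proof -
  let ?E = "extend_basis B"
  have indep: "independent ?E" by (rule independent_extend_basis[OF assms(1)])
  have "Vector_Spaces.linear scale (*) (\<lambda>v. representation ?E v b)"
    by (rule linear_representation[OF indep span_extend_basis[OF assms(1)]])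
  then have "lin_functional (\<lambda>v. representation ?E v b)"
    unfolding Vector_Spaces.linear_iff lin_functional_def by simp
  moreover have "representation ?E b' b = (if b' = b then 1 else 0)" if "b' \<in> B" for b'
    using that extend_basis_superset[OF assms(1)] representation_basis[OF indep] by auto
  ultimately show ?thesis by blast
qed

lemma word2_sum_expand_first:
  assumes I: "finite I" and B: "finite B" "independent B"
    and x: "\<And>i. i \<in> I \<Longrightarrow> x i \<in> span B"
  shows "(\<Sum>i\<in>I. word [x i, y i]) \<approx>
           (\<Sum>b\<in>B. word [b, \<Sum>i\<in>I. scale (representation B (x i) b) (y i)])"
proof -
  let ?r = "\<lambda>i b. representation B (x i) b"
  have each: "word [x i, y i] \<approx> (\<Sum>b\<in>B. word [b, scale (?r i b) (y i)])" if i: "i \<in> I" for i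
  proof -
    have "x i = (\<Sum>b\<in>B. scale (?r i b) b)"
      using sum_representation_eq[OF B(2) x[OF i] B(1) order.refl] by simp
    then have "word [x i, y i] = word ([] @ (\<Sum>b\<in>B. scale (?r i b) b) # [y i])" by simp
    also have "\<dots> \<approx> (\<Sum>b\<in>B. word ([] @ scale (?r i b) b # [y i]))"
      by (rule word_sum_slot[OF B(1)])
    also have "\<dots> \<approx> (\<Sum>b\<in>B. fsmult (?r i b) (word [b, y i]))"
      using word_scale_slot[of "[]"] by (intro teq_sum) simp
    also have "\<dots> \<approx> (\<Sum>b\<in>B. word [b, scale (?r i b) (y i)])"
      by (intro teq_sum word2_scale_second)
    finally show ?thesis .
  qed
  have "(\<Sum>i\<in>I. word [x i, y i]) \<approx> (\<Sum>i\<in>I. \<Sum>b\<in>B. word [b, scale (?r i b) (y i)])"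
    using each by (intro teq_sum)
  also have "\<dots> = (\<Sum>b\<in>B. \<Sum>i\<in>I. word ([b] @ scale (?r i b) (y i) # []))"
    by (simp add: sum.swap[of _ I])
  also have "\<dots> \<approx> (\<Sum>b\<in>B. word ([b] @ (\<Sum>i\<in>I. scale (?r i b) (y i)) # []))"
    by (intro teq_sum teq_sym[OF word_sum_slot[OF I]])
  finally show ?thesis by simp
qed

lemma word2_sum_expand_second:
  assumes I: "finite I" and B: "finite B" "independent B"
    and y: "\<And>i. i \<in> I \<Longrightarrow> y i \<in> span B"
  shows "(\<Sum>i\<in>I. word [x i, y i]) \<approx>
           (\<Sum>b\<in>B. word [\<Sum>i\<in>I. scale (representation B (y i) b) (x i), b])"
proof -
  let ?r = "\<lambda>i b. representation B (y i) b"
  have each: "word [x i, y i] \<approx> (\<Sum>b\<in>B. word [scale (?r i b) (x i), b])" if i: "i \<in> I" for i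
  proof -
    have "y i = (\<Sum>b\<in>B. scale (?r i b) b)"
      using sum_representation_eq[OF B(2) y[OF i] B(1) order.refl] by simp
    then have "word [x i, y i] = word ([x i] @ (\<Sum>b\<in>B. scale (?r i b) b) # [])" by simp
    also have "\<dots> \<approx> (\<Sum>b\<in>B. word ([x i] @ scale (?r i b) b # []))"
      by (rule word_sum_slot[OF B(1)])
    also have "\<dots> \<approx> (\<Sum>b\<in>B. fsmult (?r i b) (word [x i, b]))"
      using word_scale_slot[of "[x i]"] by (intro teq_sum) simp
    also have "\<dots> \<approx> (\<Sum>b\<in>B. word [scale (?r i b) (x i), b])"
      by (intro teq_sum word2_scale_first)
    finally show ?thesis .
  qed
  have "(\<Sum>i\<in>I. word [x i, y i]) \<approx> (\<Sum>i\<in>I. \<Sum>b\<in>B. word [scale (?r i b) (x i), b])"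
    using each by (intro teq_sum)
  also have "\<dots> = (\<Sum>b\<in>B. \<Sum>i\<in>I. word ([] @ scale (?r i b) (x i) # [b]))"
    by (simp add: sum.swap[of _ I])
  also have "\<dots> \<approx> (\<Sum>b\<in>B. word ([] @ (\<Sum>i\<in>I. scale (?r i b) (x i)) # [b]))"
    by (intro teq_sum teq_sym[OF word_sum_slot[OF I]])
  finally show ?thesis by simp
qed

end

section \<open>Moor-bialgebras\<close>

lemma length2_obtain:
  assumes "length w = 2"
  obtains p q where "w = [p, q]"
  using assms by (cases w; cases "tl w") auto

locale moor_bialg = tensor_power scale for scale :: "'k::field_char_0 \<Rightarrow> 'h::ab_group_add \<Rightarrow> 'h" +
  fixes G :: "nat \<Rightarrow> 'h set" and prec :: "'h \<Rightarrow> 'h \<Rightarrow> 'h" and D :: "'h \<Rightarrow> ('h list \<Rightarrow> 'k)"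
  assumes graded: "graded scale G"
    and prec_linear2: "\<And>x. Vector_Spaces.linear scale scale (prec x)"
    and prec_linear1: "\<And>y. Vector_Spaces.linear scale scale (\<lambda>x. prec x y)"
    and Delta_in_span: "\<And>x. D x \<in> fs.span (word ` {w. length w = 2})"
    and Delta_add: "\<And>x y. D (x + y) \<approx> D x + D y"
    and Delta_scale: "\<And>c x. D (scale c x) \<approx> fsmult c (D x)"
    and second_Delta_Delta: "\<And>x. lin_ext (second_Delta D) (D x) \<approx> 0"
    and first_Delta_Delta: "\<And>x. lin_ext (first_Delta D) (D x) \<approx> lin_ext flip23 (lin_ext (first_Delta D) (D x))"
    and Delta_prec: "\<And>x y. D (prec x y) \<approx> word [x, proj1 G y] + lin_ext (prec_first prec y) (D x)"
begin

lemma prec_add2: "prec x (a + b) = prec x a + prec x b"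
  using prec_linear2[of x] unfolding Vector_Spaces.linear_iff by blast

lemma prec_scale2: "prec x (scale c a) = scale c (prec x a)"
  using prec_linear2[of x] unfolding Vector_Spaces.linear_iff by blast

lemma prec_add1: "prec (a + b) y = prec a y + prec b y"
  using prec_linear1[of y] unfolding Vector_Spaces.linear_iff by blast

lemma prec_scale1: "prec (scale c a) y = scale c (prec a y)"
  using prec_linear1[of y] unfolding Vector_Spaces.linear_iff by blast

lemma lin_endo_prec: "lin_endo (\<lambda>a. prec a y)"
  by (simp add: lin_endo_def prec_add1 prec_scale1)

lemma Delta_finite_supp: "finite_supp (D x) \<and> supp (D x) \<subseteq> {w. length w = 2}"
proof -
  let ?P = "\<lambda>t :: 'h list \<Rightarrow> 'k. finite_supp t \<and> supp t \<subseteq> {w. length w = 2}"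
  have "fs.subspace (Collect ?P)"
    unfolding fs.subspace_def
  proof (intro conjI ballI allI)
    fix s t :: "'h list \<Rightarrow> 'k"
    assume "s \<in> Collect ?P" "t \<in> Collect ?P"
    then show "s + t \<in> Collect ?P" using supp_add[of s t] by auto
  next
    fix c and t :: "'h list \<Rightarrow> 'k"
    assume "t \<in> Collect ?P"
    then show "fsmult c t \<in> Collect ?P" using supp_fsmult[of c t] by auto
  qed (simp add: supp_def)
  moreover have "?P t" if "t \<in> word ` {w. length w = 2}" for t
    using that by auto
  ultimately show ?thesis
    using fs.span_induct[OF Delta_in_span[of x], of ?P] by blast
qed

lemma finite_supp_Delta[simp, intro]: "finite_supp (D x)"
  using Delta_finite_supp by blast

lemma length_supp_Delta: "w \<in> supp (D x) \<Longrightarrow> length w = 2"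
  using Delta_finite_supp by blast

lemma Delta_zero: "D 0 \<approx> 0"
  using Delta_scale[of 0 0] by (simp only: scale_zero_left fsmult_zero_left)

lemma Delta_diff: "D (x - y) \<approx> D x - D y"
proof -
  have "D (x + scale (-1) y) \<approx> D x + fsmult (-1) (D y)"
    by (rule teq_trans[OF Delta_add teq_add[OF teq_refl Delta_scale]])
  then show ?thesis by (simp add: fsmult_minus_one scale_minus_left)
qed

lemma Delta_sum: "finite I \<Longrightarrow> D (\<Sum>i\<in>I. f i) \<approx> (\<Sum>i\<in>I. D (f i))"
proof (induction I rule: finite_induct)
  case empty
  then show ?case using Delta_zero by (simp only: sum.empty)
next
  case (insert x F)
  have "D (\<Sum>i\<in>insert x F. f i) = D (f x + (\<Sum>i\<in>F. f i))" using insert by simp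
  also have "\<dots> \<approx> D (f x) + D (\<Sum>i\<in>F. f i)" by (rule Delta_add)
  also have "\<dots> \<approx> D (f x) + (\<Sum>i\<in>F. D (f i))" using insert by (intro teq_add) auto
  finally show ?case using insert(1,2) by (subst sum.insert) auto
qed

lemma proj1_grade1:
  assumes b: "b \<in> G 1"
  shows "proj1 G b = b"
proof -
  let ?c = "\<lambda>p::nat. if p = 1 then b else 0"
  let ?P = "\<lambda>c. c 0 = 0 \<and> (\<forall>p>0. c p \<in> G p) \<and> finite {p. c p \<noteq> 0}
                 \<and> b = (\<Sum>p\<in>{p. c p \<noteq> 0}. c p)"
  have "p > 0 \<Longrightarrow> 0 \<in> G p" for p
    using graded subspace_0 unfolding graded_def by blast
  moreover have "{p. ?c p \<noteq> 0} = (if b = 0 then {} else {1})" by auto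
  ultimately have "?P ?c" using b by auto
  moreover have "\<exists>!c. ?P c" using graded unfolding graded_def by blast
  ultimately have "grade_comp G b = ?c" unfolding grade_comp_def by (rule the1_equality[rotated])
  then show ?thesis by (simp add: proj1_def)
qed

declare second_Delta.simps[simp del] first_Delta.simps[simp del] prec_first.simps[simp del]

lemma second_Delta_eq:
  "second_Delta D w = (if length w = 2 then lin_ext (pad [w!0] []) (D (w!1)) else 0)"
  by (cases "(D, w)" rule: second_Delta.cases) (auto simp: pad_def[abs_def] second_Delta.simps)

lemma prec_first_eq:
  "prec_first prec y w = (if length w = 2 then word [prec (w!0) y, w!1] else 0)"
  by (cases "(prec, y, w)" rule: prec_first.cases) (auto simp: prec_first.simps)

lemma first_Delta_eq:
  "first_Delta D w = (if w = [] then 0 else lin_ext (pad [] (tl w)) (D (hd w)))"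
  by (cases w) (auto simp: pad_def[abs_def] first_Delta.simps)

lemma finite_supp_prec_first[simp, intro]: "finite_supp (prec_first prec y w)"
  by (simp add: prec_first_eq)

lemma finite_supp_second_Delta[simp, intro]: "finite_supp (second_Delta D w)"
  by (auto simp: second_Delta_eq)

lemma finite_supp_first_Delta[simp, intro]: "finite_supp (first_Delta D w)"
  by (auto simp: first_Delta_eq)

lemma pad_Delta_add:
  "lin_ext (pad p r) (D (a + b)) \<approx> lin_ext (pad p r) (D a) + lin_ext (pad p r) (D b)"
proof -
  have "lin_ext (pad p r) (D (a + b)) \<approx> lin_ext (pad p r) (D a + D b)"
    by (rule pad_teq) (auto intro: Delta_add)
  then show ?thesis by (simp add: lin_ext_add)
qed

lemma pad_Delta_scale:
  "lin_ext (pad p r) (D (scale c a)) \<approx> fsmult c (lin_ext (pad p r) (D a))"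
proof -
  have "lin_ext (pad p r) (D (scale c a)) \<approx> lin_ext (pad p r) (fsmult c (D a))"
    by (rule pad_teq) (auto intro: Delta_scale)
  then show ?thesis by (simp add: lin_ext_fsmult)
qed

lemma respects_multilin_second_Delta: "respects_multilin (second_Delta D)"
proof (rule respects_multilin_length2I)
  show "\<And>w. length w \<noteq> 2 \<Longrightarrow> second_Delta D w = 0" by (simp add: second_Delta_eq)
  show "second_Delta D [a + a', b] \<approx> second_Delta D [a, b] + second_Delta D [a', b]" for a a' b
    using pad_add_prefix[of "D b" "[]" a a' "[]"] by (simp add: second_Delta_eq)
  show "second_Delta D [scale c a, b] \<approx> fsmult c (second_Delta D [a, b])" for c a b
    using pad_scale_prefix[of "D b" "[]" c a "[]"] by (simp add: second_Delta_eq)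
  show "second_Delta D [a, b + b'] \<approx> second_Delta D [a, b] + second_Delta D [a, b']" for a b b'
    using pad_Delta_add by (simp add: second_Delta_eq)
  show "second_Delta D [a, scale c b] \<approx> fsmult c (second_Delta D [a, b])" for c a b
    using pad_Delta_scale by (simp add: second_Delta_eq)
qed

lemma respects_multilin_first_Delta: "respects_multilin (first_Delta D)"
proof (rule respects_multilinI)
  fix u a b v
  show "first_Delta D (u @ (a + b) # v) \<approx> first_Delta D (u @ a # v) + first_Delta D (u @ b # v)"
  proof (cases u)
    case Nil
    then show ?thesis using pad_Delta_add[of "[]" v a b] by (simp add: first_Delta_eq)
  next
    case (Cons x u')
    then show ?thesis
      using lin_ext_word_add_slot[where t="D x" and p="\<lambda>w. w @ u'" and a=a and a'=b and q="\<lambda>w. v"]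
      by (simp add: first_Delta_eq pad_def[abs_def])
  qed
next
  fix u c a v
  show "first_Delta D (u @ scale c a # v) \<approx> fsmult c (first_Delta D (u @ a # v))"
  proof (cases u)
    case Nil
    then show ?thesis using pad_Delta_scale[of "[]" v c a] by (simp add: first_Delta_eq)
  next
    case (Cons x u')
    then show ?thesis
      using lin_ext_word_scale_slot[where t="D x" and p="\<lambda>w. w @ u'" and c=c and a=a and q="\<lambda>w. v"]
      by (simp add: first_Delta_eq pad_def[abs_def])
  qed
qed

lemma second_Delta_prec_first:
  "lin_ext (second_Delta D) (lin_ext (prec_first prec y) (D x)) =
   lin_ext (map_first (\<lambda>a. prec a y)) (lin_ext (second_Delta D) (D x))"
proof -
  have "lin_ext (second_Delta D) (lin_ext (prec_first prec y) (D x)) =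
        lin_ext (\<lambda>w. lin_ext (second_Delta D) (prec_first prec y w)) (D x)"
    by (rule lin_ext_comp) auto
  also have "\<dots> = lin_ext (\<lambda>w. lin_ext (map_first (\<lambda>a. prec a y)) (second_Delta D w)) (D x)"
  proof (rule lin_ext_cong)
    fix w assume "w \<in> supp (D x)"
    then obtain p q where w: "w = [p, q]" using length_supp_Delta length2_obtain by blast
    have "lin_ext (map_first (\<lambda>a. prec a y)) (second_Delta D w) =
          lin_ext (\<lambda>u. lin_ext (map_first (\<lambda>a. prec a y)) (pad [p] [] u)) (D q)"
      unfolding w second_Delta_eq by (simp, rule lin_ext_comp) auto
    also have "\<dots> = lin_ext (pad [prec p y] []) (D q)"
      by (rule lin_ext_cong) (simp add: pad_def map_first_def)
    finally show "lin_ext (second_Delta D) (prec_first prec y w) =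
          lin_ext (map_first (\<lambda>a. prec a y)) (second_Delta D w)"
      by (simp add: w prec_first_eq second_Delta_eq)
  qed
  also have "\<dots> = lin_ext (map_first (\<lambda>a. prec a y)) (lin_ext (second_Delta D) (D x))"
    by (rule lin_ext_comp[symmetric]) auto
  finally show ?thesis .
qed

text \<open>Applying \<open>id \<otimes> \<Delta>\<close> to \<open>\<Delta>(x \<prec> b) = x \<otimes> b + (x\<^sub>1 \<prec> b) \<otimes> x\<^sub>2\<close> leaves
  \<open>x \<otimes> \<Delta> b = 0\<close>; contracting the first factor with a functional that is \<open>1\<close> on \<open>x \<noteq> 0\<close>
  gives \<open>\<Delta> b = 0\<close>.\<close>

lemma grade1_primitive:
  assumes b: "b \<in> G 1"
  shows "D b \<approx> 0"
proof (cases "\<exists>x::'h. x \<noteq> 0")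
  case False
  then have "b = 0" by blast
  then show ?thesis using Delta_zero by simp
next
  case True
  then obtain x :: 'h where "x \<noteq> 0" by blast
  then have "independent {x}" by (simp add: independent_insert)
  then obtain \<phi> where \<phi>: "lin_functional \<phi>" "\<phi> x = 1"
    using dual_functional_exists[of "{x}" x] by auto
  let ?SD = "lin_ext (second_Delta D)"
  let ?PF = "lin_ext (prec_first prec b) (D x)"
  let ?C = "lin_ext (pad [x] []) (D b)"
  have PF: "?SD ?PF \<approx> 0"
  proof -
    have "?SD ?PF = lin_ext (map_first (\<lambda>a. prec a b)) (?SD (D x))"
      by (rule second_Delta_prec_first)
    also have "\<dots> \<approx> 0"
      by (rule lin_ext_teq_zero[OF respects_multilin_map_first[OF lin_endo_prec]])
        (auto intro: second_Delta_Delta)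
    finally show ?thesis .
  qed
  have "?SD (D (prec x b)) \<approx> ?SD (word [x, b] + ?PF)"
    using Delta_prec[of x b] proj1_grade1[OF b]
    by (intro lin_ext_teq_cong[OF respects_multilin_second_Delta]) auto
  also have "\<dots> = ?C + ?SD ?PF"
    by (subst lin_ext_add) (auto simp: second_Delta_eq)
  also have "\<dots> \<approx> ?C" using PF teq_add[OF teq_refl PF] by simp
  finally have "?C \<approx> 0"
    using second_Delta_Delta[of "prec x b"] teq_sym teq_trans by blast
  then have "lin_ext (contract_first \<phi>) ?C \<approx> 0"
    by (rule lin_ext_teq_zero[OF respects_multilin_contract_first[OF \<phi>(1)], rotated]) auto
  then show ?thesis using \<phi>(2) by (simp add: contract_first_pad)
qed

lemma Delta_pow_Suc: "Delta_pow D (Suc s) x = lin_ext (first_Delta D) (Delta_pow D s x)"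
  by (cases s) (simp_all add: first_Delta.simps lin_ext_word_id)

lemma Delta_pow_finite_supp:
  "finite_supp (Delta_pow D s x) \<and> supp (Delta_pow D s x) \<subseteq> {w. length w = Suc s}"
proof (induction s)
  case 0
  then show ?case by simp
next
  case (Suc s)
  have "supp (first_Delta D w) \<subseteq> {w. length w = Suc (Suc s)}"
    if w: "w \<in> supp (Delta_pow D s x)" for w
  proof -
    have len: "length w = Suc s" using w Suc by auto
    then have "supp (first_Delta D w) \<subseteq> (\<lambda>u. [] @ u @ tl w) ` supp (D (hd w))"
      using supp_lin_ext_pad[of "[]" "tl w" "D (hd w)"] by (auto simp: first_Delta_eq)
    also have "\<dots> \<subseteq> {w. length w = Suc (Suc s)}" using len length_supp_Delta by auto
    finally show ?thesis .
  qed
  then have "supp (Delta_pow D (Suc s) x) \<subseteq> {w. length w = Suc (Suc s)}"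
    unfolding Delta_pow_Suc using supp_lin_ext[of "first_Delta D" "Delta_pow D s x"] by blast
  moreover have "finite_supp (Delta_pow D (Suc s) x)"
    unfolding Delta_pow_Suc using Suc by (intro finite_supp_lin_ext) auto
  ultimately show ?case by simp
qed

lemma finite_supp_Delta_pow[simp, intro]: "finite_supp (Delta_pow D s x)"
  using Delta_pow_finite_supp by blast

lemma length_supp_Delta_pow: "w \<in> supp (Delta_pow D s x) \<Longrightarrow> length w = Suc s"
  using Delta_pow_finite_supp by blast

lemma Delta_pow_add: "Delta_pow D s (a + b) \<approx> Delta_pow D s a + Delta_pow D s b"
proof (induction s)
  case 0
  then show ?case using word_add_slot[of "[]" a b "[]"] by (simp only: Delta_pow.simps append.simps)
next
  case (Suc s)
  have "lin_ext (first_Delta D) (Delta_pow D s (a + b)) \<approx>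
          lin_ext (first_Delta D) (Delta_pow D s a + Delta_pow D s b)"
    by (intro lin_ext_teq_cong[OF respects_multilin_first_Delta] finite_supp_Delta_pow
        finite_supp_add Suc.IH)
  then show ?case by (simp only: Delta_pow_Suc lin_ext_add[OF finite_supp_Delta_pow finite_supp_Delta_pow])
qed

lemma Delta_pow_scale: "Delta_pow D s (scale c a) \<approx> fsmult c (Delta_pow D s a)"
proof (induction s)
  case 0
  then show ?case using word_scale_slot[of "[]" c a "[]"] by (simp only: Delta_pow.simps append.simps)
next
  case (Suc s)
  have "lin_ext (first_Delta D) (Delta_pow D s (scale c a)) \<approx>
          lin_ext (first_Delta D) (fsmult c (Delta_pow D s a))"
    by (intro lin_ext_teq_cong[OF respects_multilin_first_Delta] finite_supp_Delta_pow
        finite_supp_fsmult Suc.IH)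
  then show ?case by (simp only: Delta_pow_Suc lin_ext_fsmult[OF finite_supp_Delta_pow])
qed

definition Delta_pow_id :: "nat \<Rightarrow> 'h list \<Rightarrow> ('h list \<Rightarrow> 'k)" where
  "Delta_pow_id s w =
     (if length w = 2 then lin_ext (pad [] [w!1]) (Delta_pow D s (w!0)) else 0)"

lemma Delta_pow_id_word2: "Delta_pow_id s [a, b] = lin_ext (pad [] [b]) (Delta_pow D s a)"
  by (simp add: Delta_pow_id_def)

lemma finite_supp_Delta_pow_id[simp, intro]: "finite_supp (Delta_pow_id s w)"
  by (auto simp: Delta_pow_id_def)

lemma respects_multilin_Delta_pow_id: "respects_multilin (Delta_pow_id s)"
proof (rule respects_multilin_length2I)
  show "\<And>w. length w \<noteq> 2 \<Longrightarrow> Delta_pow_id s w = 0" by (simp add: Delta_pow_id_def)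
  show "Delta_pow_id s [a + a', b] \<approx> Delta_pow_id s [a, b] + Delta_pow_id s [a', b]" for a a' b
  proof -
    have "lin_ext (pad [] [b]) (Delta_pow D s (a + a')) \<approx>
            lin_ext (pad [] [b]) (Delta_pow D s a + Delta_pow D s a')"
      by (intro pad_teq Delta_pow_add) auto
    then show ?thesis by (simp add: Delta_pow_id_word2 lin_ext_add)
  qed
  show "Delta_pow_id s [scale c a, b] \<approx> fsmult c (Delta_pow_id s [a, b])" for c a b
  proof -
    have "lin_ext (pad [] [b]) (Delta_pow D s (scale c a)) \<approx>
            lin_ext (pad [] [b]) (fsmult c (Delta_pow D s a))"
      by (intro pad_teq Delta_pow_scale) auto
    then show ?thesis by (simp add: Delta_pow_id_word2 lin_ext_fsmult)
  qed
  show "Delta_pow_id s [a, b + b'] \<approx> Delta_pow_id s [a, b] + Delta_pow_id s [a, b']" for a b b'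
    using pad_add_suffix[of "Delta_pow D s a" "[]" b b' "[]"] by (simp add: Delta_pow_id_word2)
  show "Delta_pow_id s [a, scale c b] \<approx> fsmult c (Delta_pow_id s [a, b])" for c a b
    using pad_scale_suffix[of "Delta_pow D s a" "[]" c b "[]"] by (simp add: Delta_pow_id_word2)
qed

lemma Delta_pow_id_add_first: "Delta_pow_id s [x + y, d] \<approx> Delta_pow_id s [x, d] + Delta_pow_id s [y, d]"
  using respects_multilin_Delta_pow_id[of s] unfolding respects_multilin_def
  by (metis append.simps(1))

lemma Delta_pow_id_scale_first: "Delta_pow_id s [scale c x, d] \<approx> fsmult c (Delta_pow_id s [x, d])"
  using respects_multilin_Delta_pow_id[of s] unfolding respects_multilin_def
  by (metis append.simps(1))

lemma Delta_pow_id_add_second: "Delta_pow_id s [d, x + y] \<approx> Delta_pow_id s [d, x] + Delta_pow_id s [d, y]"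
  using respects_multilin_Delta_pow_id[of s] unfolding respects_multilin_def
  by (metis append_Cons append_Nil)

lemma Delta_pow_id_scale_second: "Delta_pow_id s [d, scale c x] \<approx> fsmult c (Delta_pow_id s [d, x])"
  using respects_multilin_Delta_pow_id[of s] unfolding respects_multilin_def
  by (metis append_Cons append_Nil)

lemma first_Delta_append:
  assumes "u \<noteq> []"
  shows "first_Delta D (u @ [q]) = lin_ext (pad [] [q]) (first_Delta D u)"
proof -
  have "lin_ext (pad [] [q]) (first_Delta D u) =
        lin_ext (\<lambda>v. lin_ext (pad [] [q]) (pad [] (tl u) v)) (D (hd u))"
    using assms by (simp add: first_Delta_eq lin_ext_comp)
  also have "\<dots> = first_Delta D (u @ [q])"
    using assms by (simp add: first_Delta_eq pad_def[abs_def])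
  finally show ?thesis by simp
qed

lemma Delta_pow_Suc_eq_Delta_pow_id: "Delta_pow D (Suc s) x \<approx> lin_ext (Delta_pow_id s) (D x)"
proof (induction s)
  case 0
  have "lin_ext (Delta_pow_id 0) (D x) = lin_ext word (D x)"
  proof (rule lin_ext_cong)
    fix w assume "w \<in> supp (D x)"
    then obtain p q where "w = [p, q]" using length_supp_Delta length2_obtain by blast
    then show "Delta_pow_id 0 w = word w" by (simp add: Delta_pow_id_word2 pad_def)
  qed
  then show ?case by (simp add: lin_ext_word_id)
next
  case (Suc s)
  have "Delta_pow D (Suc (Suc s)) x = lin_ext (first_Delta D) (Delta_pow D (Suc s) x)"
    by simp
  also have "\<dots> \<approx> lin_ext (first_Delta D) (lin_ext (Delta_pow_id s) (D x))"
    using Suc by (intro lin_ext_teq_cong[OF respects_multilin_first_Delta]) auto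
  also have "\<dots> = lin_ext (\<lambda>w. lin_ext (first_Delta D) (Delta_pow_id s w)) (D x)"
    by (rule lin_ext_comp) auto
  also have "\<dots> = lin_ext (Delta_pow_id (Suc s)) (D x)"
  proof (rule lin_ext_cong)
    fix w assume "w \<in> supp (D x)"
    then obtain p q where w: "w = [p, q]" using length_supp_Delta length2_obtain by blast
    have "lin_ext (first_Delta D) (Delta_pow_id s w) =
            lin_ext (\<lambda>u. first_Delta D (u @ [q])) (Delta_pow D s p)"
      by (simp add: w Delta_pow_id_word2 lin_ext_comp pad_def)
    also have "\<dots> = lin_ext (\<lambda>u. lin_ext (pad [] [q]) (first_Delta D u)) (Delta_pow D s p)"
    proof (rule lin_ext_cong)
      fix u assume "u \<in> supp (Delta_pow D s p)"
      then have "u \<noteq> []" using length_supp_Delta_pow by fastforce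
      then show "first_Delta D (u @ [q]) = lin_ext (pad [] [q]) (first_Delta D u)"
        by (rule first_Delta_append)
    qed
    also have "\<dots> = lin_ext (pad [] [q]) (Delta_pow D (Suc s) p)"
      by (simp add: Delta_pow_Suc lin_ext_comp)
    finally show "lin_ext (first_Delta D) (Delta_pow_id s w) = Delta_pow_id (Suc s) w"
      by (simp add: w Delta_pow_id_word2)
  qed
  finally show ?case .
qed

definition mult :: "'h list \<Rightarrow> 'h" where
  "mult w = (if length w = 2 then prec (w!0) (w!1) else 0)"

lemma multilinear_mult: "multilinear mult"
  unfolding multilinear_def
proof (intro conjI allI)
  fix u a b v
  show "mult (u @ (a + b) # v) = mult (u @ a # v) + mult (u @ b # v)"
  proof (cases "length (u @ a # v) = 2")
    case True
    then show ?thesis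
      by (cases rule: length2_append_cases) (auto simp: mult_def prec_add1 prec_add2)
  qed (simp add: mult_def)
next
  fix u c a v
  show "mult (u @ scale c a # v) = scale c (mult (u @ a # v))"
  proof (cases "length (u @ a # v) = 2")
    case True
    then show ?thesis
      by (cases rule: length2_append_cases) (auto simp: mult_def prec_scale1 prec_scale2)
  qed (simp add: mult_def)
qed

abbreviation mult_Delta :: "'h \<Rightarrow> 'h" where
  "mult_Delta x \<equiv> hlin_ext mult (D x)"

definition prec_Delta_pow_id :: "nat \<Rightarrow> 'h list \<Rightarrow> ('h list \<Rightarrow> 'k)" where
  "prec_Delta_pow_id s w = (if length w = 3 then Delta_pow_id s [prec (w!0) (w!1), w!2] else 0)"

lemma prec_Delta_pow_id_word3: "prec_Delta_pow_id s [a, b, d] = Delta_pow_id s [prec a b, d]"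
  by (simp add: prec_Delta_pow_id_def)

lemma finite_supp_prec_Delta_pow_id[simp, intro]: "finite_supp (prec_Delta_pow_id s w)"
  by (auto simp: prec_Delta_pow_id_def)

lemma respects_multilin_prec_Delta_pow_id: "respects_multilin (prec_Delta_pow_id s)"
  by (rule respects_multilin_length3I)
    (auto simp: prec_Delta_pow_id_def prec_Delta_pow_id_word3 prec_add1 prec_add2 prec_scale1
        prec_scale2
      intro: Delta_pow_id_add_first Delta_pow_id_scale_first Delta_pow_id_add_second
        Delta_pow_id_scale_second)

lemma prec_Delta_pow_id_pad_Delta:
  "lin_ext (prec_Delta_pow_id s) (lin_ext (pad [] [b]) (D v)) \<approx> Delta_pow_id s [mult_Delta v, b]"
proof -
  have "lin_ext (prec_Delta_pow_id s) (lin_ext (pad [] [b]) (D v)) =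
          lin_ext (\<lambda>w. prec_Delta_pow_id s (w @ [b])) (D v)"
    by (subst lin_ext_comp) (auto simp: pad_def)
  also have "\<dots> = lin_ext (\<lambda>w. Delta_pow_id s [mult w, b]) (D v)"
  proof (rule lin_ext_cong)
    fix w assume "w \<in> supp (D v)"
    then obtain p q where "w = [p, q]" using length_supp_Delta length2_obtain by blast
    then show "prec_Delta_pow_id s (w @ [b]) = Delta_pow_id s [mult w, b]"
      by (simp add: prec_Delta_pow_id_word3 mult_def)
  qed
  also have "\<dots> \<approx> Delta_pow_id s [mult_Delta v, b]"
    by (rule lin_ext_comp_hlin_ext[where g="\<lambda>h. Delta_pow_id s [h, b]"])
      (auto intro: Delta_pow_id_add_first Delta_pow_id_scale_first)
  finally show ?thesis .
qed

lemma prec_Delta_pow_id_flip_pad_Delta: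
  "lin_ext (prec_Delta_pow_id s) (lin_ext flip23 (lin_ext (pad [] [b]) (D v))) =
   lin_ext (Delta_pow_id s) (lin_ext (prec_first prec b) (D v))"
proof -
  have "lin_ext (prec_Delta_pow_id s) (lin_ext flip23 (lin_ext (pad [] [b]) (D v))) =
          lin_ext (prec_Delta_pow_id s) (lin_ext (\<lambda>w. flip23 (w @ [b])) (D v))"
    by (subst lin_ext_comp) (auto simp: pad_def)
  also have "\<dots> = lin_ext (\<lambda>w. lin_ext (prec_Delta_pow_id s) (flip23 (w @ [b]))) (D v)"
    by (rule lin_ext_comp) auto
  also have "\<dots> = lin_ext (\<lambda>w. lin_ext (Delta_pow_id s) (prec_first prec b w)) (D v)"
  proof (rule lin_ext_cong)
    fix w assume "w \<in> supp (D v)"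
    then obtain p q where "w = [p, q]" using length_supp_Delta length2_obtain by blast
    then show "lin_ext (prec_Delta_pow_id s) (flip23 (w @ [b])) =
               lin_ext (Delta_pow_id s) (prec_first prec b w)"
      by (simp add: prec_Delta_pow_id_word3 prec_first_eq)
  qed
  also have "\<dots> = lin_ext (Delta_pow_id s) (lin_ext (prec_first prec b) (D v))"
    by (rule lin_ext_comp[symmetric]) auto
  finally show ?thesis .
qed

lemma Delta_decomposition_first:
  "\<exists>A q. finite A \<and> independent A \<and> D x \<approx> (\<Sum>a\<in>A. word [a, q a])"
proof -
  let ?S = "supp (D x)"
  have "D x = (\<Sum>w\<in>?S. fsmult (D x w) (word w))"
    using lin_ext_word_id[of "D x"] lin_ext_eq[of "D x" ?S word] by simp
  also have "\<dots> \<approx> (\<Sum>w\<in>?S. word [w!0, scale (D x w) (w!1)])"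
  proof (rule teq_sum)
    fix w assume "w \<in> ?S"
    then obtain p q where "w = [p, q]" using length_supp_Delta length2_obtain by blast
    then show "fsmult (D x w) (word w) \<approx> word [w!0, scale (D x w) (w!1)]"
      using word2_scale_second by simp
  qed
  finally have Dx: "D x \<approx> (\<Sum>w\<in>?S. word [w!0, scale (D x w) (w!1)])" .
  obtain A where A: "A \<subseteq> (\<lambda>w. w!0) ` ?S" "independent A" "(\<lambda>w. w!0) ` ?S \<subseteq> span A"
    using maximal_independent_subset by blast
  have "finite A" using A(1) finite_subset by blast
  moreover have "(\<Sum>w\<in>?S. word [w!0, scale (D x w) (w!1)]) \<approx>
      (\<Sum>a\<in>A. word [a, \<Sum>w\<in>?S. scale (representation A (w!0) a) (scale (D x w) (w!1))])"
    using A(3) by (intro word2_sum_expand_first \<open>finite A\<close> A(2)) auto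
  ultimately show ?thesis using A(2) teq_trans[OF Dx] by (intro exI conjI)
qed

text \<open>This is where \<open>(id \<otimes> \<Delta>) \<Delta> = 0\<close> enters: the second factors of \<open>\<Delta> x\<close>, taken
  against independent first factors, are primitive.\<close>

lemma Delta_second_factor_primitive:
  assumes A: "finite A" "independent A" and Dx: "D x \<approx> (\<Sum>a\<in>A. word [a, q a])"
    and a: "a \<in> A"
  shows "D (q a) \<approx> 0"
proof -
  obtain \<phi> where \<phi>: "lin_functional \<phi>" "\<forall>a'\<in>A. \<phi> a' = (if a' = a then 1 else 0)"
    using dual_functional_exists[OF A(2) a] by blast
  let ?SD = "lin_ext (second_Delta D)"
  let ?Z = "\<Sum>a'\<in>A. lin_ext (pad [a'] []) (D (q a'))"
  have "?SD (\<Sum>a\<in>A. word [a, q a]) = ?Z"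
    using A(1) by (simp add: lin_ext_sum second_Delta_eq)
  moreover have "?SD (D x) \<approx> ?SD (\<Sum>a\<in>A. word [a, q a])"
    using A(1) by (intro lin_ext_teq_cong[OF respects_multilin_second_Delta] Dx) auto
  ultimately have "?Z \<approx> 0"
    using teq_trans[OF teq_sym second_Delta_Delta[of x]] by (metis teq_sym)
  then have "lin_ext (contract_first \<phi>) ?Z \<approx> 0"
    using A(1) by (intro lin_ext_teq_zero[OF respects_multilin_contract_first[OF \<phi>(1)]]) auto
  moreover have "lin_ext (contract_first \<phi>) ?Z = D (q a)"
    by (subst lin_ext_sum[OF A(1)])
      (auto simp: contract_first_pad intro!: sum_fsmult_indicator[OF A(1) a \<phi>(2)])
  ultimately show ?thesis by simp
qed

lemma Delta_pow_decomposed_factor: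
  assumes B: "finite B" "independent B" and Dx: "D x \<approx> (\<Sum>b\<in>B. word [u b, b])"
    and ker: "Delta_pow D (Suc s) x \<approx> 0" and b: "b \<in> B"
  shows "Delta_pow D s (u b) \<approx> 0"
proof -
  obtain \<psi> where \<psi>: "lin_functional \<psi>" "\<forall>b'\<in>B. \<psi> b' = (if b' = b then 1 else 0)"
    using dual_functional_exists[OF B(2) b] by blast
  let ?Z = "\<Sum>b\<in>B. lin_ext (pad [] [b]) (Delta_pow D s (u b))"
  have "Delta_pow D (Suc s) x \<approx> lin_ext (Delta_pow_id s) (D x)"
    by (rule Delta_pow_Suc_eq_Delta_pow_id)
  also have "\<dots> \<approx> lin_ext (Delta_pow_id s) (\<Sum>b\<in>B. word [u b, b])"
    using B(1) by (intro lin_ext_teq_cong[OF respects_multilin_Delta_pow_id] Dx) auto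
  also have "\<dots> = ?Z"
    using B(1) by (simp add: lin_ext_sum Delta_pow_id_word2)
  finally have "?Z \<approx> 0" using ker teq_sym teq_trans by blast
  then have "lin_ext (contract_last \<psi>) ?Z \<approx> 0"
    using B(1) by (intro lin_ext_teq_zero[OF respects_multilin_contract_last[OF \<psi>(1)]]) auto
  moreover have "lin_ext (contract_last \<psi>) ?Z = Delta_pow D s (u b)"
    by (subst lin_ext_sum[OF B(1)])
      (auto simp: contract_last_pad intro!: sum_fsmult_indicator[OF B(1) b \<psi>(2)])
  ultimately show ?thesis by simp
qed

lemma mult_Delta_decomposed:
  assumes "finite B" "D x \<approx> (\<Sum>b\<in>B. word [u b, b])"
  shows "mult_Delta x = (\<Sum>b\<in>B. prec (u b) b)"
proof -
  have "mult_Delta x = hlin_ext mult (\<Sum>b\<in>B. word [u b, b])"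
    using assms by (intro hlin_ext_teq[OF multilinear_mult]) auto
  also have "\<dots> = (\<Sum>b\<in>B. prec (u b) b)"
    using assms(1) by (simp add: hlin_ext_sum mult_def)
  finally show ?thesis .
qed

lemma Delta_mult_Delta_decomposed:
  assumes B: "finite B" "B \<subseteq> G 1" and Dx: "D x \<approx> (\<Sum>b\<in>B. word [u b, b])"
  shows "D (mult_Delta x - scale c x) \<approx>
           (\<Sum>b\<in>B. word [u b, b] + lin_ext (prec_first prec b) (D (u b)))
             - fsmult c (\<Sum>b\<in>B. word [u b, b])"
proof -
  have "D (mult_Delta x - scale c x) \<approx> D (\<Sum>b\<in>B. prec (u b) b) - D (scale c x)"
    unfolding mult_Delta_decomposed[OF B(1) Dx] by (rule Delta_diff)
  also have "\<dots> \<approx> (\<Sum>b\<in>B. D (prec (u b) b)) - fsmult c (\<Sum>b\<in>B. word [u b, b])"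
    by (intro teq_diff Delta_sum[OF B(1)] teq_trans[OF Delta_scale teq_fsmult[OF Dx]])
  also have "\<dots> \<approx> (\<Sum>b\<in>B. word [u b, b] + lin_ext (prec_first prec b) (D (u b)))
                    - fsmult c (\<Sum>b\<in>B. word [u b, b])"
  proof (intro teq_diff teq_sum teq_refl)
    fix b assume "b \<in> B"
    then have "proj1 G b = b" using B(2) proj1_grade1 by blast
    then show "D (prec (u b) b) \<approx> word [u b, b] + lin_ext (prec_first prec b) (D (u b))"
      using Delta_prec[of "u b" b] by simp
  qed
  finally show ?thesis .
qed

text \<open>The twisted coassociativity \<open>(\<Delta> \<otimes> id) \<Delta> = (id \<otimes> \<tau>) (\<Delta> \<otimes> id) \<Delta>\<close>, evaluated
  through \<open>(\<Delta>\<^sup>s \<circ> \<prec>) \<otimes> id\<close>.\<close>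

lemma Delta_pow_id_prec_first_decomposed:
  assumes B: "finite B" and Dx: "D x \<approx> (\<Sum>b\<in>B. word [u b, b])"
  shows "(\<Sum>b\<in>B. lin_ext (Delta_pow_id s) (lin_ext (prec_first prec b) (D (u b)))) \<approx>
           (\<Sum>b\<in>B. Delta_pow_id s [mult_Delta (u b), b])"
proof -
  let ?T = "lin_ext (first_Delta D) (D x)"
  let ?C = "\<Sum>b\<in>B. lin_ext (pad [] [b]) (D (u b))"
  let ?P = "lin_ext (prec_Delta_pow_id s)"
  have fin: "finite_supp ?C" "finite_supp ?T" using B by auto
  have TC: "?T \<approx> ?C"
  proof -
    have "?T \<approx> lin_ext (first_Delta D) (\<Sum>b\<in>B. word [u b, b])"
      using B by (intro lin_ext_teq_cong[OF respects_multilin_first_Delta] Dx) auto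
    also have "\<dots> = ?C"
      using B by (simp add: lin_ext_sum first_Delta_eq)
    finally show ?thesis .
  qed
  let ?F = "\<lambda>b. lin_ext flip23 (lin_ext (pad [] [b]) (D (u b)))"
  have "lin_ext flip23 ?C = (\<Sum>b\<in>B. ?F b)"
    using B by (intro lin_ext_sum) auto
  moreover have "?P (\<Sum>b\<in>B. ?F b) = (\<Sum>b\<in>B. ?P (?F b))"
    using B by (intro lin_ext_sum) auto
  ultimately have "(\<Sum>b\<in>B. lin_ext (Delta_pow_id s) (lin_ext (prec_first prec b) (D (u b)))) =
                     ?P (lin_ext flip23 ?C)"
    by (simp add: prec_Delta_pow_id_flip_pad_Delta)
  also have "\<dots> \<approx> ?P (lin_ext flip23 ?T)"
    using fin by (intro lin_ext_teq_cong[OF respects_multilin_prec_Delta_pow_id]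
        lin_ext_teq_cong[OF respects_multilin_flip23] teq_sym[OF TC] finite_supp_lin_ext)
      auto
  also have "\<dots> \<approx> ?P ?T"
    using fin by (intro lin_ext_teq_cong[OF respects_multilin_prec_Delta_pow_id]
        teq_sym[OF first_Delta_Delta] finite_supp_lin_ext) auto
  also have "\<dots> \<approx> ?P ?C"
    using fin by (intro lin_ext_teq_cong[OF respects_multilin_prec_Delta_pow_id] TC)
  also have "\<dots> = (\<Sum>b\<in>B. ?P (lin_ext (pad [] [b]) (D (u b))))"
    using B by (intro lin_ext_sum) auto
  also have "\<dots> \<approx> (\<Sum>b\<in>B. Delta_pow_id s [mult_Delta (u b), b])"
    by (intro teq_sum prec_Delta_pow_id_pad_Delta)
  finally show ?thesis .
qed

lemma Delta_pow_id_mult_Delta: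
  assumes "Delta_pow D n (mult_Delta v - scale (of_nat n) v) \<approx> 0"
  shows "Delta_pow_id n [mult_Delta v, b] \<approx> fsmult (of_nat n) (Delta_pow_id n [v, b])"
proof -
  let ?w = "mult_Delta v - scale (of_nat n) v"
  have "Delta_pow_id n [?w, b] \<approx> 0"
    unfolding Delta_pow_id_word2
    by (rule lin_ext_teq_zero[OF respects_multilin_pad finite_supp_Delta_pow assms])
  then have "Delta_pow_id n [scale (of_nat n) v + ?w, b] \<approx>
               fsmult (of_nat n) (Delta_pow_id n [v, b]) + 0"
    by (intro teq_trans[OF Delta_pow_id_add_first] teq_add Delta_pow_id_scale_first)
  then show ?thesis by simp
qed

lemma Delta_pow_mult_Delta_decomposed:
  assumes B: "finite B" "B \<subseteq> G 1" and Dx: "D x \<approx> (\<Sum>b\<in>B. word [u b, b])"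
    and IH: "\<And>b. b \<in> B \<Longrightarrow> Delta_pow D n (mult_Delta (u b) - scale (of_nat n) (u b)) \<approx> 0"
  shows "Delta_pow D (Suc n) (mult_Delta x - scale (of_nat (Suc n)) x) \<approx> 0"
proof -
  let ?Q = "lin_ext (Delta_pow_id n)"
  let ?W = "\<Sum>b\<in>B. word [u b, b]"
  let ?PF = "\<lambda>b. lin_ext (prec_first prec b) (D (u b))"
  let ?Z = "\<Sum>b\<in>B. Delta_pow_id n [u b, b]"
  have fin: "finite_supp ?W" "finite_supp (\<Sum>b\<in>B. ?PF b)" using B(1) by auto
  have QW: "?Q ?W = ?Z" using B(1) by (simp add: lin_ext_sum)
  have "(\<Sum>b\<in>B. Delta_pow_id n [mult_Delta (u b), b]) \<approx>
          (\<Sum>b\<in>B. fsmult (of_nat n) (Delta_pow_id n [u b, b]))"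
    using IH by (intro teq_sum Delta_pow_id_mult_Delta)
  then have QPF: "(\<Sum>b\<in>B. ?Q (?PF b)) \<approx> fsmult (of_nat n) ?Z"
    using Delta_pow_id_prec_first_decomposed[OF B(1) Dx, of n] teq_trans
    by (simp add: fs.scale_sum_right)
  have "Delta_pow D (Suc n) (mult_Delta x - scale (of_nat (Suc n)) x) \<approx>
          ?Q (D (mult_Delta x - scale (of_nat (Suc n)) x))"
    by (rule Delta_pow_Suc_eq_Delta_pow_id)
  also have "\<dots> \<approx> ?Q ((\<Sum>b\<in>B. word [u b, b] + ?PF b) - fsmult (of_nat (Suc n)) ?W)"
    using B(1) by (intro lin_ext_teq_cong[OF respects_multilin_Delta_pow_id]
        Delta_mult_Delta_decomposed[OF B Dx] finite_supp_diff finite_supp_sum finite_supp_add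
        finite_supp_fsmult) auto
  also have "\<dots> = ?Z + (\<Sum>b\<in>B. ?Q (?PF b)) - fsmult (of_nat (Suc n)) ?Z"
  proof -
    let ?SP = "\<Sum>b\<in>B. ?PF b"
    have "?Q (?W + ?SP - fsmult (of_nat (Suc n)) ?W) =
            ?Q ?W + ?Q ?SP - fsmult (of_nat (Suc n)) (?Q ?W)"
      by (simp only: lin_ext_diff[OF finite_supp_add[OF fin] finite_supp_fsmult[OF fin(1)]]
          lin_ext_add[OF fin] lin_ext_fsmult[OF fin(1)])
    moreover have "?Q ?SP = (\<Sum>b\<in>B. ?Q (?PF b))"
      using B(1) by (intro lin_ext_sum) auto
    ultimately show ?thesis by (simp only: sum.distrib QW)
  qed
  also have "\<dots> \<approx> ?Z + fsmult (of_nat n) ?Z - fsmult (of_nat (Suc n)) ?Z"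
    by (intro teq_diff teq_add QPF teq_refl)
  also have "\<dots> = 0" by (simp add: fsmult_add_left)
  finally show ?thesis .
qed

end

section \<open>Connected Moor-bialgebras\<close>

locale connected_moor_bialg = moor_bialg +
  assumes primitive_grade1: "\<And>x. D x \<approx> 0 \<Longrightarrow> x \<in> G 1"
begin

lemma Delta_decomposition:
  "\<exists>B u. finite B \<and> independent B \<and> B \<subseteq> G 1 \<and> D x \<approx> (\<Sum>b\<in>B. word [u b, b])"
proof -
  obtain A q where A: "finite A" "independent A" and Dx: "D x \<approx> (\<Sum>a\<in>A. word [a, q a])"
    using Delta_decomposition_first by blast
  obtain B where B: "B \<subseteq> q ` A" "independent B" "q ` A \<subseteq> span B"
    using maximal_independent_subset by blast
  have "finite B" using B(1) A(1) finite_subset by blast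
  have "B \<subseteq> G 1"
  proof
    fix b assume "b \<in> B"
    then obtain a where "a \<in> A" "b = q a" using B(1) by blast
    then show "b \<in> G 1" using primitive_grade1 Delta_second_factor_primitive[OF A Dx] by simp
  qed
  moreover have "(\<Sum>a\<in>A. word [a, q a]) \<approx>
                   (\<Sum>b\<in>B. word [\<Sum>a\<in>A. scale (representation B (q a) b) a, b])"
    using B(3) by (intro word2_sum_expand_second A(1) \<open>finite B\<close> B(2)) auto
  ultimately show ?thesis
    using teq_trans[OF Dx] \<open>finite B\<close> B(2) by (intro exI conjI)
qed

text \<open>Dividing by \<open>n + 1\<close> in the induction step is where characteristic zero is used.\<close>

lemma ker_Delta_pow_subset:
  assumes G1: "G 1 \<subseteq> S" and S: "subspace S"
    and prec_closed: "\<And>x y. x \<in> S \<Longrightarrow> y \<in> S \<Longrightarrow> prec x y \<in> S"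
  shows "Delta_pow D (Suc n) x \<approx> 0 \<Longrightarrow>
           x \<in> S \<and> Delta_pow D n (mult_Delta x - scale (of_nat n) x) \<approx> 0"
proof (induction n arbitrary: x)
  case 0
  then have Dx: "D x \<approx> 0" by (simp only: Delta_pow.simps)
  then have "mult_Delta x - scale (of_nat 0) x = 0"
    using hlin_ext_teq[OF multilinear_mult finite_supp_Delta finite_supp_zero] by simp
  moreover have "Delta_pow D 0 0 \<approx> 0"
    using word_zero_slot[of "[]" "[]"] by (simp only: Delta_pow.simps append.simps)
  ultimately show ?case
    using G1 primitive_grade1[OF Dx] by (metis subsetD)
next
  case (Suc n)
  obtain B u where B: "finite B" "independent B" "B \<subseteq> G 1"
    and Dx: "D x \<approx> (\<Sum>b\<in>B. word [u b, b])"
    using Delta_decomposition by blast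
  have IH: "u b \<in> S \<and> Delta_pow D n (mult_Delta (u b) - scale (of_nat n) (u b)) \<approx> 0"
    if "b \<in> B" for b
    using Suc.IH Delta_pow_decomposed_factor[OF B(1,2) Dx Suc.prems that] by blast
  define y where "y = mult_Delta x - scale (of_nat (Suc n)) x"
  have y: "Delta_pow D (Suc n) y \<approx> 0"
    unfolding y_def using IH by (intro Delta_pow_mult_Delta_decomposed[OF B(1,3) Dx]) blast
  have "mult_Delta x \<in> S"
    unfolding mult_Delta_decomposed[OF B(1) Dx]
    using IH G1 B(3) by (intro subspace_sum[OF S] prec_closed) auto
  moreover have "y \<in> S" using Suc.IH[OF y] by blast
  ultimately have "scale (inverse (of_nat (Suc n))) (mult_Delta x - y) \<in> S"
    using S by (intro subspace_scale subspace_diff)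
  moreover have "mult_Delta x - y = scale (of_nat (Suc n)) x"
    by (simp add: y_def)
  then have "scale (inverse (of_nat (Suc n))) (mult_Delta x - y) = x"
    by (simp only: scale_scale left_inverse[OF of_nat_neq_0] scale_one)
  ultimately have "x \<in> S" by simp
  with y show ?case unfolding y_def by (intro conjI)
qed

end

theorem lemma4p3:
  fixes scale :: "'k::field_char_0 \<Rightarrow> 'h::ab_group_add \<Rightarrow> 'h"
    and G :: "nat \<Rightarrow> 'h set"
    and prec :: "'h \<Rightarrow> 'h \<Rightarrow> 'h"
    and D :: "'h \<Rightarrow> ('h list \<Rightarrow> 'k)"
  assumes "moor_bialgebra scale G prec D"
    and "connected_moor scale G D"
  shows "moor_generated scale prec (primitives scale D) = UNIV \<and> primitives scale D = G 1"
proof -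
  interpret connected_moor_bialg scale G prec D
    using assms unfolding moor_bialgebra_def connected_moor_def primitives_def
      connected_moor_bialg_def connected_moor_bialg_axioms_def moor_bialg_def
      moor_bialg_axioms_def tensor_power_def
    by auto
  have primitives: "primitives scale D = G 1"
    using assms(2) grade1_primitive unfolding connected_moor_def primitives_def by auto
  have "x \<in> S" if "primitives scale D \<subseteq> S" "subspace S" "\<forall>x\<in>S. \<forall>y\<in>S. prec x y \<in> S" for x S
  proof -
    obtain r where "r \<ge> 1" "x \<in> ker_Delta_pow scale D r"
      using assms(2) unfolding connected_moor_def by blast
    then obtain n where "Delta_pow D (Suc n) x \<approx> 0"
      unfolding ker_Delta_pow_def by (cases r) auto
    then show "x \<in> S" using ker_Delta_pow_subset[of S n x] that primitives by auto
  qed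
  then show ?thesis using primitives unfolding moor_generated_def by auto
qed

end
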